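(* Let $\delta=\ln\left(\frac{\beta}{1-\beta}\right)$ and $c=\frac{4M(2M+1)}{\mu(1-\beta)}\cdot\frac{\exp(\varepsilon/2)+1}{\exp(\varepsilon/2)-1}$, and let $N$ be sufficiently large such that $\sqrt{\frac{g(N)}{\ln N}}\ge c\,\frac{M^{\ln5/\delta^2}}{\delta}$. Then in any round $r$, with probability at least $1-\frac{10M+3}{N^{10}}$, $$\widehat Q_j^r\overset{1+2\delta_Q}{\sim}Q_j^{r-1}\quad\text{for every option }j,$$ where $\delta_Q=c\sqrt{\frac{\ln N}{g(N)}}$ and $\widehat Q_j^r=\frac1N\sum_{i=1}^N\widehat Q^r_{i,j}$.
   Context: Notation: for reals $a,b$ and $c\ge0$, $a\overset{c}{\sim}b$ means $\frac1c\le\frac ab\le c$. Setting. $\mathcal G=(\mathcal N,\mathcal E)$ is a connected, non-bipartite undirected graph on agents $\mathcal N=\{1,\dots,N\}$; $\mathcal N_i$ is the neighbor set of $i$, $N_i=|\mathcal N_i|$. There are $M$ options; quality signals $\Phi_j^r\in\{0,1\}$ are i.i.d. Bernoulli$(\eta_j)$ over rounds. $X^r_{i,j}\in\{0,1\}$ indicates agent $i$ adopts option $j$ in round $r$ ($\sum_jX^r_{i,j}\le1$); $D^r_j=\sum_iX^r_{i,j}$, $D^r=\sum_jD^r_j$, popularity $Q^r_j=D^r_j/D^r$, $Q^0_j=1/M$. The function $g:\mathbb N^+\to\mathbb R$ satisfies: for every $\ell>0$, $g(N)>\ell\ln N$ and $g(N)<\ell N$ for all sufficiently large $N$. Parameters: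 $\varepsilon>0$, $\mu\in(0,1)$, $\beta\in(1/2,\frac{e}{e+1})$ (so $0<\delta\le1$), $\sigma\ge11$, $h=16\sigma/(1-\beta)$. Metropolis–Hastings random walk: from $i$ move to $i'\in\mathcal N_i$ with probability $\min\{1/N_i,1/N_{i'}\}$, else stay; walk length $L=O(\log N)$ chosen so that the endpoint is at each agent with probability in $[\frac1N-\frac1{N^3},\frac1N+\frac1{N^3}]$. Round $r$: (1) an agent that adopted an option in round $r-1$ perturbs each coordinate of its adoption vector independently (keep with probability $\frac{e^{\varepsilon/2}}{e^{\varepsilon/2}+1}$, flip otherwise); (2) each such agent launches $hg(N)$ independent random-walk tokens of length $L$ carrying its perturbed vector (forwarded via per-agent FIFO queues, up to $hg(N)$ tokens per agent per slot); a token is sampled by the agent where it ends; (3) with $\Lambda^r_{i,j}$ the fraction of $i$'s sampled vectors with $j$-th coordinate $1$, $\widetilde Q^r_{i,j}=\max\{\frac{e^{\varepsilon/2}+1}{e^{\varepsilon/2}-1}\Lambda^r_{i,j}-\frac1{e^{\varepsilon/2}-1},0\}$, $\widehat Q^r_{i,j}=\widetilde Q^r_{i,j}/\sum_{j'}\widetilde Q^r_{i,j'}$, and $i$ selects option $j$ with probability $(1-\mu)\widehat Q^r_{i,j}+\mu/M$; (4) having selected $j^*$, $i$ adopts it with probability $\beta$ if $\Phi^r_{j^*}=1$, $1-\beta$ if $\Phi^r_{j^*}=0$, else adopts nothing. *)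

theory Defs
  imports "HOL-Probability.Probability"
begin

text \<open>Agents are 0..N-1, options are 0..M-1. An adoption state is a map
  agent -> adopted option (None = adopted nothing); X i = Some j encodes X_{i,j} = 1.\<close>

definition sim :: "real \<Rightarrow> real \<Rightarrow> real \<Rightarrow> bool" where
  "sim c a b \<longleftrightarrow> 1 / c \<le> a / b \<and> a / b \<le> c"

definition nbrs :: "(nat \<Rightarrow> nat \<Rightarrow> bool) \<Rightarrow> nat \<Rightarrow> nat \<Rightarrow> nat set" where
  "nbrs E N i = {k. k < N \<and> E i k}"

definition deg :: "(nat \<Rightarrow> nat \<Rightarrow> bool) \<Rightarrow> nat \<Rightarrow> nat \<Rightarrow> nat" where
  "deg E N i = card (nbrs E N i)"

definition graph_ok :: "(nat \<Rightarrow> nat \<Rightarrow> bool) \<Rightarrow> nat \<Rightarrow> bool" where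
  "graph_ok E N \<longleftrightarrow>
     (\<forall>a b. E a b \<longrightarrow> a < N \<and> b < N) \<and>
     (\<forall>a b. E a b \<longrightarrow> E b a) \<and>
     (\<forall>a. \<not> E a a) \<and>
     (\<forall>a<N. \<forall>b<N. E\<^sup>*\<^sup>* a b) \<and>
     \<not> (\<exists>col :: nat \<Rightarrow> bool. \<forall>a b. E a b \<longrightarrow> col a \<noteq> col b)"

definition mh_prob :: "(nat \<Rightarrow> nat \<Rightarrow> bool) \<Rightarrow> nat \<Rightarrow> nat \<Rightarrow> nat \<Rightarrow> real" where
  "mh_prob E N i k =
     (if k \<in> nbrs E N i then min (1 / real (deg E N i)) (1 / real (deg E N k))
      else if k = i then 1 - (\<Sum>k'\<in>nbrs E N i. min (1 / real (deg E N i)) (1 / real (deg E N k')))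
      else 0)"

definition mh_step :: "(nat \<Rightarrow> nat \<Rightarrow> bool) \<Rightarrow> nat \<Rightarrow> nat \<Rightarrow> nat pmf" where
  "mh_step E N i = embed_pmf (mh_prob E N i)"

fun walk :: "(nat \<Rightarrow> nat \<Rightarrow> bool) \<Rightarrow> nat \<Rightarrow> nat \<Rightarrow> nat \<Rightarrow> nat pmf" where
  "walk E N 0 i = return_pmf i"
| "walk E N (Suc l) i = bind_pmf (walk E N l i) (mh_step E N)"

definition mixing :: "(nat \<Rightarrow> nat \<Rightarrow> bool) \<Rightarrow> nat \<Rightarrow> nat \<Rightarrow> bool" where
  "mixing E N L \<longleftrightarrow> (\<forall>i<N. \<forall>k<N.
      1 / real N - 1 / real N ^ 3 \<le> pmf (walk E N L i) k \<and>
      pmf (walk E N L i) k \<le> 1 / real N + 1 / real N ^ 3)"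

definition adopters :: "nat \<Rightarrow> (nat \<Rightarrow> nat option) \<Rightarrow> nat set" where
  "adopters N X = {i. i < N \<and> X i \<noteq> None}"

definition tokens :: "nat \<Rightarrow> nat \<Rightarrow> (nat \<Rightarrow> nat option) \<Rightarrow> (nat \<times> nat) set" where
  "tokens N K X = adopters N X \<times> {..<K}"

definition keep_prob :: "real \<Rightarrow> real" where
  "keep_prob \<epsilon> = exp (\<epsilon> / 2) / (exp (\<epsilon> / 2) + 1)"

text \<open>Perturbed vectors v i j (only meaningful for adopters i and j < M).\<close>
definition perturb_pmf :: "nat \<Rightarrow> nat \<Rightarrow> real \<Rightarrow> (nat \<Rightarrow> nat option) \<Rightarrow> (nat \<Rightarrow> nat \<Rightarrow> bool) pmf" where
  "perturb_pmf N M \<epsilon> X =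
     map_pmf (\<lambda>keep i j. if keep i j then X i = Some j else X i \<noteq> Some j)
       (Pi_pmf (adopters N X) (\<lambda>_. False)
          (\<lambda>i. Pi_pmf {..<M} False (\<lambda>_. bernoulli_pmf (keep_prob \<epsilon>))))"

definition endpoints_pmf :: "(nat \<Rightarrow> nat \<Rightarrow> bool) \<Rightarrow> nat \<Rightarrow> nat \<Rightarrow> nat \<Rightarrow> (nat \<Rightarrow> nat option)
    \<Rightarrow> (nat \<times> nat \<Rightarrow> nat) pmf" where
  "endpoints_pmf E N L K X = Pi_pmf (tokens N K X) 0 (\<lambda>(i, t). walk E N L i)"

definition Lam :: "nat \<Rightarrow> nat \<Rightarrow> (nat \<Rightarrow> nat option) \<Rightarrow> (nat \<Rightarrow> nat \<Rightarrow> bool) \<Rightarrow> (nat \<times> nat \<Rightarrow> nat)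
    \<Rightarrow> nat \<Rightarrow> nat \<Rightarrow> real" where
  "Lam N K X v e k j =
     real (card {\<tau> \<in> tokens N K X. e \<tau> = k \<and> v (fst \<tau>) j}) /
     real (card {\<tau> \<in> tokens N K X. e \<tau> = k})"

definition Qtilde :: "real \<Rightarrow> real \<Rightarrow> real" where
  "Qtilde \<epsilon> lam = max ((exp (\<epsilon> / 2) + 1) / (exp (\<epsilon> / 2) - 1) * lam - 1 / (exp (\<epsilon> / 2) - 1)) 0"

text \<open>Convention: if all \<open>Qtilde\<close> of an agent vanish, its normalised estimate is uniform.\<close>
definition Qhat_of :: "nat \<Rightarrow> real \<Rightarrow> (nat \<Rightarrow> real) \<Rightarrow> nat \<Rightarrow> real" where
  "Qhat_of M \<epsilon> lam j =
     (let s = (\<Sum>j'<M. Qtilde \<epsilon> (lam j')) in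
      if s = 0 then 1 / real M else Qtilde \<epsilon> (lam j) / s)"

definition est_pmf :: "(nat \<Rightarrow> nat \<Rightarrow> bool) \<Rightarrow> nat \<Rightarrow> nat \<Rightarrow> nat \<Rightarrow> real \<Rightarrow> nat
    \<Rightarrow> (nat \<Rightarrow> nat option) \<Rightarrow> (nat \<Rightarrow> nat \<Rightarrow> real) pmf" where
  "est_pmf E N L M \<epsilon> K X =
     bind_pmf (perturb_pmf N M \<epsilon> X) (\<lambda>v.
       map_pmf (\<lambda>e k. Qhat_of M \<epsilon> (Lam N K X v e k)) (endpoints_pmf E N L K X))"

definition select_pmf :: "nat \<Rightarrow> real \<Rightarrow> (nat \<Rightarrow> real) \<Rightarrow> nat pmf" where
  "select_pmf M \<mu> q = embed_pmf (\<lambda>j. if j < M then (1 - \<mu>) * q j + \<mu> / real M else 0)"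

definition adopt_pmf :: "nat \<Rightarrow> nat \<Rightarrow> real \<Rightarrow> real \<Rightarrow> (nat \<Rightarrow> real) \<Rightarrow> (nat \<Rightarrow> nat \<Rightarrow> real)
    \<Rightarrow> (nat \<Rightarrow> nat option) pmf" where
  "adopt_pmf N M \<mu> \<beta> \<eta> Qh =
     bind_pmf (Pi_pmf {..<M} False (\<lambda>j. bernoulli_pmf (\<eta> j))) (\<lambda>\<Phi>.
       Pi_pmf {..<N} None (\<lambda>i.
         bind_pmf (select_pmf M \<mu> (Qh i)) (\<lambda>j.
           map_pmf (\<lambda>a. if a then Some j else None)
             (bernoulli_pmf (if \<Phi> j then \<beta> else 1 - \<beta>)))))"

text \<open>Round 1 has no previously sampled data; agents use \<open>Q^0_j = 1/M\<close>.\<close>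
definition Qhat_round :: "(nat \<Rightarrow> nat \<Rightarrow> bool) \<Rightarrow> nat \<Rightarrow> nat \<Rightarrow> nat \<Rightarrow> real \<Rightarrow> nat \<Rightarrow> nat
    \<Rightarrow> (nat \<Rightarrow> nat option) \<Rightarrow> (nat \<Rightarrow> nat \<Rightarrow> real) pmf" where
  "Qhat_round E N L M \<epsilon> K r X =
     (if r = 1 then return_pmf (\<lambda>k j. 1 / real M) else est_pmf E N L M \<epsilon> K X)"

fun Xproc :: "(nat \<Rightarrow> nat \<Rightarrow> bool) \<Rightarrow> nat \<Rightarrow> nat \<Rightarrow> nat \<Rightarrow> real \<Rightarrow> real \<Rightarrow> real \<Rightarrow> (nat \<Rightarrow> real)
    \<Rightarrow> nat \<Rightarrow> nat \<Rightarrow> (nat \<Rightarrow> nat option) pmf" where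
  "Xproc E N L M \<epsilon> \<mu> \<beta> \<eta> K 0 = return_pmf (\<lambda>_. None)"
| "Xproc E N L M \<epsilon> \<mu> \<beta> \<eta> K (Suc r) =
     bind_pmf (Xproc E N L M \<epsilon> \<mu> \<beta> \<eta> K r) (\<lambda>X.
       bind_pmf (Qhat_round E N L M \<epsilon> K (Suc r) X) (adopt_pmf N M \<mu> \<beta> \<eta>))"

text \<open>Joint law of (X^{r-1}, matrix of \<open>Qhat^r_{i,j}\<close>) for round r \<ge> 1.\<close>
definition joint_pmf :: "(nat \<Rightarrow> nat \<Rightarrow> bool) \<Rightarrow> nat \<Rightarrow> nat \<Rightarrow> nat \<Rightarrow> real \<Rightarrow> real \<Rightarrow> real \<Rightarrow> (nat \<Rightarrow> real)
    \<Rightarrow> nat \<Rightarrow> nat \<Rightarrow> ((nat \<Rightarrow> nat option) \<times> (nat \<Rightarrow> nat \<Rightarrow> real)) pmf" where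
  "joint_pmf E N L M \<epsilon> \<mu> \<beta> \<eta> K r =
     bind_pmf (Xproc E N L M \<epsilon> \<mu> \<beta> \<eta> K (r - 1)) (\<lambda>X.
       map_pmf (\<lambda>Qh. (X, Qh)) (Qhat_round E N L M \<epsilon> K r X))"

definition Qpop :: "nat \<Rightarrow> nat \<Rightarrow> nat \<Rightarrow> (nat \<Rightarrow> nat option) \<Rightarrow> nat \<Rightarrow> real" where
  "Qpop N M r X j =
     (if r = 0 then 1 / real M
      else real (card {i. i < N \<and> X i = Some j}) / real (card (adopters N X)))"

definition Qbar :: "nat \<Rightarrow> (nat \<Rightarrow> nat \<Rightarrow> real) \<Rightarrow> nat \<Rightarrow> real" where
  "Qbar N Qh j = (1 / real N) * (\<Sum>i<N. Qh i j)"

end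

theory Submission
  imports Defs "HOL-Real_Asymp.Real_Asymp"
begin

text \<open>
  Let \<open>D\<close> be the number of adopters after round \<open>r - 1\<close> and \<open>\<delta> = sqrt (ln N / g N)\<close>.
  In round 1 every estimate equals \<open>1 / M = Q\<^sup>0\<close>. Otherwise, with high probability every
  option has at least \<open>a N\<close> adopters, \<open>a = \<mu> (1 - \<beta>) / (2 M)\<close>, and \<open>D \<ge> (1 - \<beta>) N / 2\<close>:
  each agent explores each option with probability at least \<open>\<mu> / M\<close> and adopts it with
  probability at least \<open>1 - \<beta>\<close>, so a multiplicative Chernoff bound applies to the adoption counts.
  Given such a state, Chernoff bounds for the randomized-response coins and for the random-walk
  tokens, whose endpoints are nearly uniform by mixing, show that the fraction \<open>\<Lambda>\<close> of vectors with
  coordinate \<open>j\<close> sampled by any agent is within \<open>4 \<delta>\<close> of its mean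
  \<open>keep * Q + (1 - keep) * (1 - Q)\<close>. Debiasing is affine and normalising divides by a sum that is
  within \<open>O (M \<delta>)\<close> of \<open>1\<close>; as \<open>Q\<^sub>j \<ge> a\<close>, the additive errors become the factor \<open>1 + 2 c \<delta>\<close>.
  Once \<open>g N / ln N\<close> is large, every failure probability is \<open>O (M / N ^ 10)\<close>.
\<close>

section \<open>Union and Chernoff bounds for product distributions\<close>

lemma prob_bind_pmf:
  "measure_pmf.prob (bind_pmf p f) A = measure_pmf.expectation p (\<lambda>x. measure_pmf.prob (f x) A)"
proof -
  have "ennreal (measure_pmf.prob (bind_pmf p f) A) = (\<integral>\<^sup>+x. emeasure (f x) A \<partial>p)"
    by (simp add: measure_pmf.emeasure_eq_measure[symmetric])
  also have "\<dots> = (\<integral>\<^sup>+x. ennreal (measure_pmf.prob (f x) A) \<partial>p)"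
    by (simp add: measure_pmf.emeasure_eq_measure)
  also have "\<dots> = ennreal (measure_pmf.expectation p (\<lambda>x. measure_pmf.prob (f x) A))"
    by (intro nn_integral_eq_integral measure_pmf.integrable_const_bound[where B=1]) auto
  finally show ?thesis by (simp add: integral_nonneg_AE)
qed

lemma prob_bind_pmf_ge:
  assumes G: "measure_pmf.prob p {x. G x} \<ge> 1 - e"
    and F: "\<And>x. x \<in> set_pmf p \<Longrightarrow> G x \<Longrightarrow> measure_pmf.prob (f x) A \<ge> 1 - e'"
    and "e \<ge> 0" "e' \<ge> 0"
  shows "measure_pmf.prob (bind_pmf p f) A \<ge> 1 - e - e'"
proof (cases "e' \<le> 1")
  case False
  then show ?thesis using \<open>e \<ge> 0\<close> measure_nonneg[of "measure_pmf (bind_pmf p f)" A] by linarith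
next
  case True
  have "(1 - e') * measure_pmf.prob p {x. G x}
        = measure_pmf.expectation p (\<lambda>x. (1 - e') * indicator {x. G x} x)"
    by simp
  also have "\<dots> \<le> measure_pmf.expectation p (\<lambda>x. measure_pmf.prob (f x) A)"
  proof (rule integral_mono_AE)
    show "integrable (measure_pmf p) (\<lambda>x. (1 - e') * indicator {x. G x} x)"
      by (intro measure_pmf.integrable_const_bound[where B="\<bar>1 - e'\<bar>"]) (auto simp: indicator_def)
    show "integrable (measure_pmf p) (\<lambda>x. measure_pmf.prob (f x) A)"
      by (intro measure_pmf.integrable_const_bound[where B=1]) auto
    show "AE x in measure_pmf p. (1 - e') * indicator {x. G x} x \<le> measure_pmf.prob (f x) A"
      using F by (intro AE_pmfI) (auto simp: indicator_def)
  qed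
  finally have "(1 - e') * measure_pmf.prob p {x. G x} \<le> measure_pmf.prob (bind_pmf p f) A"
    by (simp add: prob_bind_pmf)
  moreover have "(1 - e') * (1 - e) \<le> (1 - e') * measure_pmf.prob p {x. G x}"
    using G True by (intro mult_left_mono) auto
  moreover have "1 - e - e' \<le> (1 - e') * (1 - e)"
    using mult_nonneg_nonneg[OF assms(3,4)] by (simp add: algebra_simps)
  ultimately show ?thesis by linarith
qed

lemma prob_bind_pmf_ge_uniform:
  assumes "\<And>x. x \<in> set_pmf p \<Longrightarrow> measure_pmf.prob (f x) A \<ge> 1 - e" and "e \<ge> 0"
  shows "measure_pmf.prob (bind_pmf p f) A \<ge> 1 - e"
  using prob_bind_pmf_ge[where G="\<lambda>_. True" and e=0 and p=p and f=f and A=A] assms by simp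

lemma prob_Compl_pmf: "measure_pmf.prob p (- A) = 1 - measure_pmf.prob p A"
  using measure_pmf.prob_compl[of A p] by (simp add: Compl_eq_Diff_UNIV)

lemma prob_Ball_ge:
  assumes "finite J" and "\<And>j. j \<in> J \<Longrightarrow> measure_pmf.prob p {x. \<not> P j x} \<le> e"
  shows "measure_pmf.prob p {x. \<forall>j\<in>J. P j x} \<ge> 1 - real (card J) * e"
proof -
  have "measure_pmf.prob p (\<Union>j\<in>J. {x. \<not> P j x}) \<le> (\<Sum>j\<in>J. measure_pmf.prob p {x. \<not> P j x})"
    by (rule measure_UNION_le) (use assms in auto)
  also have "\<dots> \<le> real (card J) * e"
    using sum_bounded_above[of J "\<lambda>j. measure_pmf.prob p {x. \<not> P j x}" e] assms(2) by simp
  finally show ?thesis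
    using prob_Compl_pmf[of p "\<Union>j\<in>J. {x. \<not> P j x}"] by (simp add: Compl_eq)
qed

lemma prob_Pi_pmf_component:
  assumes "finite A" "j \<in> A"
  shows "measure_pmf.prob (Pi_pmf A d P) {f. Q (f j)} = measure_pmf.prob (P j) {x. Q x}"
proof -
  have "measure_pmf.prob (Pi_pmf A d P) {f. Q (f j)}
      = measure_pmf.prob (map_pmf (\<lambda>f. f j) (Pi_pmf A d P)) {x. Q x}"
    by (simp add: vimage_def)
  then show ?thesis using assms by (simp add: Pi_pmf_component)
qed

lemma prob_Markov_pmf:
  fixes u :: "'a \<Rightarrow> real"
  assumes "\<And>x. 0 \<le> u x" "\<And>x. u x \<le> B" "c > 0"
  shows "measure_pmf.prob p {x. u x \<ge> c} \<le> measure_pmf.expectation p u / c"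
proof -
  have "integrable (measure_pmf p) u"
    using assms by (intro measure_pmf.integrable_const_bound[where B=B]) auto
  then show ?thesis using integral_Markov_inequality_measure[of "measure_pmf p" u UNIV c] assms by auto
qed

lemma exp_minus_le_quadratic:
  fixes x :: real
  assumes "0 \<le> x" "x \<le> 1"
  shows "exp (- x) \<le> 1 - x + x\<^sup>2"
proof -
  have "1 + x \<le> exp x" by (rule exp_ge_add_one_self_aux) (use assms in auto)
  then have "exp (- x) \<le> 1 / (1 + x)" using assms by (simp add: exp_minus field_simps)
  also have "\<dots> \<le> 1 - x + x\<^sup>2"
    using assms by (simp add: field_simps power2_eq_square)
  finally show ?thesis .
qed

lemma expectation_power_card_Pi_pmf:
  fixes P :: "'i \<Rightarrow> 'a pmf" and F :: "'i \<Rightarrow> 'a \<Rightarrow> bool" and a :: real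
  assumes "finite I" "a > 0"
  shows "measure_pmf.expectation (Pi_pmf I d P) (\<lambda>\<omega>. a ^ card {x\<in>I. F x (\<omega> x)})
       \<le> exp ((a - 1) * (\<Sum>x\<in>I. measure_pmf.prob (P x) {y. F x y}))"
proof -
  define h where "h x y = (if F x y then a else 1)" for x y
  have "a ^ card {x\<in>I. F x (\<omega> x)} = (\<Prod>x\<in>I. h x (\<omega> x))" for \<omega>
    using assms(1) by (simp add: h_def prod.If_cases Int_def)
  then have "measure_pmf.expectation (Pi_pmf I d P) (\<lambda>\<omega>. a ^ card {x\<in>I. F x (\<omega> x)})
      = measure_pmf.expectation (Pi_pmf I d P) (\<lambda>\<omega>. \<Prod>x\<in>I. h x (\<omega> x))"
    by simp
  also have "\<dots> = (\<Prod>x\<in>I. measure_pmf.expectation (P x) (h x))"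
    by (rule expectation_prod_Pi_pmf[OF assms(1)])
       (use assms(2) in \<open>auto simp: h_def intro!: measure_pmf.integrable_const_bound[where B="a + 1"]\<close>)
  also have "\<dots> \<le> (\<Prod>x\<in>I. exp ((a - 1) * measure_pmf.prob (P x) {y. F x y}))"
  proof (rule prod_mono)
    fix x
    let ?q = "measure_pmf.prob (P x) {y. F x y}"
    have "h x = (\<lambda>y. 1 + (a - 1) * indicator {y. F x y} y)"
      by (auto simp: h_def indicator_def)
    then have ex: "measure_pmf.expectation (P x) (h x) = 1 + (a - 1) * ?q"
      by (simp add: Bochner_Integration.integral_add measure_pmf.integrable_const_bound[where B=1])
    have "(1 - a) * ?q \<le> 1"
      using assms(2) by (cases "a \<le> 1") (auto intro: mult_le_one order.trans[of _ 0])
    then have "(a - 1) * ?q \<ge> -1" by (simp add: algebra_simps)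
    then show "0 \<le> measure_pmf.expectation (P x) (h x) \<and>
               measure_pmf.expectation (P x) (h x) \<le> exp ((a - 1) * ?q)"
      unfolding ex using exp_ge_add_one_self[of "(a - 1) * ?q"] by linarith
  qed
  also have "\<dots> = exp ((a - 1) * (\<Sum>x\<in>I. measure_pmf.prob (P x) {y. F x y}))"
    using assms(1) by (simp add: exp_sum sum_distrib_left)
  finally show ?thesis .
qed

lemma Chernoff_Pi_pmf_upper:
  fixes I :: "'i set" and P :: "'i \<Rightarrow> 'a pmf" and F :: "'i \<Rightarrow> 'a \<Rightarrow> bool"
  defines "m \<equiv> \<Sum>x\<in>I. measure_pmf.prob (P x) {y. F x y}"
  assumes "finite I" "m \<le> m'" "0 < t" "t \<le> 2 * m'"
  shows "measure_pmf.prob (Pi_pmf I d P) {\<omega>. real (card {x\<in>I. F x (\<omega> x)}) \<ge> m + t}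
           \<le> exp (- t\<^sup>2 / (4 * m'))"
proof -
  define l where "l = t / (2 * m')"
  let ?S = "\<lambda>\<omega>. card {x\<in>I. F x (\<omega> x)}"
  have l: "0 < l" "l \<le> 1" using assms by (auto simp: l_def)
  have "0 \<le> m" unfolding m_def by (simp add: sum_nonneg)
  have "measure_pmf.prob (Pi_pmf I d P) {\<omega>. real (?S \<omega>) \<ge> m + t}
      \<le> measure_pmf.prob (Pi_pmf I d P) {\<omega>. exp l ^ ?S \<omega> \<ge> exp (l * (m + t))}"
    using l by (intro measure_pmf.finite_measure_mono) (auto simp: exp_of_nat_mult[symmetric] mult.commute)
  also have "\<dots> \<le> measure_pmf.expectation (Pi_pmf I d P) (\<lambda>\<omega>. exp l ^ ?S \<omega>) / exp (l * (m + t))"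
    by (rule prob_Markov_pmf[where B="exp l ^ card I"])
       (use l assms(2) in \<open>auto intro!: power_increasing card_mono\<close>)
  also have "\<dots> \<le> exp ((exp l - 1) * m) / exp (l * (m + t))"
    using expectation_power_card_Pi_pmf[OF assms(2), of "exp l" d P F]
    by (intro divide_right_mono) (auto simp: m_def)
  also have "\<dots> \<le> exp (l\<^sup>2 * m' - l * t)"
    unfolding exp_diff[symmetric]
  proof (intro exp_mono)
    have "(exp l - 1) * m \<le> (l + l\<^sup>2) * m"
      using exp_bound[of l] l \<open>0 \<le> m\<close> by (intro mult_right_mono) auto
    moreover have "l\<^sup>2 * m \<le> l\<^sup>2 * m'" using assms(3) by (intro mult_left_mono) auto
    ultimately show "(exp l - 1) * m - l * (m + t) \<le> l\<^sup>2 * m' - l * t"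
      by (simp add: algebra_simps)
  qed
  also have "l\<^sup>2 * m' - l * t = - t\<^sup>2 / (4 * m')"
    using assms by (simp add: l_def field_simps power2_eq_square)
  finally show ?thesis .
qed

lemma Chernoff_Pi_pmf_lower:
  fixes I :: "'i set" and P :: "'i \<Rightarrow> 'a pmf" and F :: "'i \<Rightarrow> 'a \<Rightarrow> bool"
  defines "m \<equiv> \<Sum>x\<in>I. measure_pmf.prob (P x) {y. F x y}"
  assumes "finite I" "m \<le> m'" "0 < t" "t \<le> 2 * m'"
  shows "measure_pmf.prob (Pi_pmf I d P) {\<omega>. real (card {x\<in>I. F x (\<omega> x)}) \<le> m - t}
           \<le> exp (- t\<^sup>2 / (4 * m'))"
proof -
  define l where "l = t / (2 * m')"
  let ?S = "\<lambda>\<omega>. card {x\<in>I. F x (\<omega> x)}"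
  have l: "0 < l" "l \<le> 1" using assms by (auto simp: l_def)
  have "0 \<le> m" unfolding m_def by (simp add: sum_nonneg)
  have "measure_pmf.prob (Pi_pmf I d P) {\<omega>. real (?S \<omega>) \<le> m - t}
      \<le> measure_pmf.prob (Pi_pmf I d P) {\<omega>. exp (- l) ^ ?S \<omega> \<ge> exp (- l * (m - t))}"
    using l by (intro measure_pmf.finite_measure_mono) (auto simp: exp_of_nat_mult[symmetric] mult.commute)
  also have "\<dots> \<le> measure_pmf.expectation (Pi_pmf I d P) (\<lambda>\<omega>. exp (- l) ^ ?S \<omega>) / exp (- l * (m - t))"
    by (rule prob_Markov_pmf[where B=1]) (use l in \<open>auto intro!: power_le_one\<close>)
  also have "\<dots> \<le> exp ((exp (- l) - 1) * m) / exp (- l * (m - t))"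
    using expectation_power_card_Pi_pmf[OF assms(2), of "exp (- l)" d P F]
    by (intro divide_right_mono) (auto simp: m_def)
  also have "\<dots> \<le> exp (l\<^sup>2 * m' - l * t)"
    unfolding exp_diff[symmetric]
  proof (intro exp_mono)
    have "(exp (- l) - 1) * m \<le> (- l + l\<^sup>2) * m"
      using exp_minus_le_quadratic[of l] l \<open>0 \<le> m\<close> by (intro mult_right_mono) auto
    moreover have "l\<^sup>2 * m \<le> l\<^sup>2 * m'" using assms(3) by (intro mult_left_mono) auto
    ultimately show "(exp (- l) - 1) * m - - l * (m - t) \<le> l\<^sup>2 * m' - l * t"
      by (simp add: algebra_simps)
  qed
  also have "l\<^sup>2 * m' - l * t = - t\<^sup>2 / (4 * m')"
    using assms by (simp add: l_def field_simps power2_eq_square)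
  finally show ?thesis .
qed

lemma Chernoff_Pi_pmf_abs:
  fixes I :: "'i set" and P :: "'i \<Rightarrow> 'a pmf" and F :: "'i \<Rightarrow> 'a \<Rightarrow> bool"
  defines "m \<equiv> \<Sum>x\<in>I. measure_pmf.prob (P x) {y. F x y}"
  assumes "finite I" "m \<le> m'" "0 < t" "t \<le> 2 * m'"
  shows "measure_pmf.prob (Pi_pmf I d P) {\<omega>. \<bar>real (card {x\<in>I. F x (\<omega> x)}) - m\<bar> \<ge> t}
           \<le> 2 * exp (- t\<^sup>2 / (4 * m'))"
proof -
  let ?p = "measure_pmf.prob (Pi_pmf I d P)" and ?S = "\<lambda>\<omega>. real (card {x\<in>I. F x (\<omega> x)})"
  have "?p {\<omega>. \<bar>?S \<omega> - m\<bar> \<ge> t} \<le> ?p ({\<omega>. ?S \<omega> \<ge> m + t} \<union> {\<omega>. ?S \<omega> \<le> m - t})"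
    by (intro measure_pmf.finite_measure_mono) auto
  also have "\<dots> \<le> ?p {\<omega>. ?S \<omega> \<ge> m + t} + ?p {\<omega>. ?S \<omega> \<le> m - t}"
    by (rule measure_Un_le) auto
  also have "\<dots> \<le> exp (- t\<^sup>2 / (4 * m')) + exp (- t\<^sup>2 / (4 * m'))"
    using Chernoff_Pi_pmf_upper[of I P F m' t d] Chernoff_Pi_pmf_lower[of I P F m' t d] assms
    by (intro add_mono) auto
  finally show ?thesis by simp
qed

section \<open>Randomized response\<close>

definition adopters_of :: "nat \<Rightarrow> (nat \<Rightarrow> nat option) \<Rightarrow> nat \<Rightarrow> nat set" where
  "adopters_of N X j = {i. i < N \<and> X i = Some j}"

definition perturbed_mean :: "real \<Rightarrow> real \<Rightarrow> real" where
  "perturbed_mean \<epsilon> q = keep_prob \<epsilon> * q + (1 - keep_prob \<epsilon>) * (1 - q)"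

lemma finite_adopters [simp]: "finite (adopters N X)"
  by (rule finite_subset[of _ "{..<N}"]) (auto simp: adopters_def)

lemma card_adopters_le: "card (adopters N X) \<le> N"
  using card_mono[of "{..<N}" "adopters N X"] by (auto simp: adopters_def)

lemma adopters_of_subset: "adopters_of N X j \<subseteq> adopters N X"
  by (auto simp: adopters_of_def adopters_def)

lemma finite_adopters_of [simp]: "finite (adopters_of N X j)"
  using finite_subset[OF adopters_of_subset] by simp

lemma card_adopters_of_le: "card (adopters_of N X j) \<le> card (adopters N X)"
  by (simp add: adopters_of_subset card_mono)

lemma sum_card_adopters_of:
  assumes "\<And>i j. X i = Some j \<Longrightarrow> j < M"
  shows "(\<Sum>j<M. card (adopters_of N X j)) = card (adopters N X)"
proof -
  have "adopters N X = (\<Union>j<M. adopters_of N X j)"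
    using assms by (auto simp: adopters_def adopters_of_def)
  also have "card \<dots> = (\<Sum>j<M. card (adopters_of N X j))"
    by (rule card_UN_disjoint) (auto simp: adopters_of_def)
  finally show ?thesis by simp
qed

lemma Qpop_eq: "r \<noteq> 0 \<Longrightarrow> Qpop N M r X j = real (card (adopters_of N X j)) / real (card (adopters N X))"
  by (simp add: Qpop_def adopters_of_def)

lemma finite_tokens [simp]: "finite (tokens N K X)"
  by (simp add: tokens_def)

lemma keep_prob_bounds: "0 \<le> keep_prob \<epsilon>" "keep_prob \<epsilon> \<le> 1"
  unfolding keep_prob_def by (auto simp: field_simps add_pos_pos)

lemma prob_bernoulli_row:
  fixes j M :: nat
  assumes "j < M" "0 \<le> p" "p \<le> 1"
  shows "measure_pmf.prob (Pi_pmf {..<M} False (\<lambda>_. bernoulli_pmf p)) {row. row j} = p"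
    and "measure_pmf.prob (Pi_pmf {..<M} False (\<lambda>_. bernoulli_pmf p)) {row. \<not> row j} = 1 - p"
proof -
  have bool_sets: "{x. x} = {True}" "{x. \<not> x} = {False}" by auto
  have "measure_pmf.prob (Pi_pmf {..<M} False (\<lambda>_. bernoulli_pmf p)) {row. row j}
      = measure_pmf.prob (bernoulli_pmf p) {True}"
    using prob_Pi_pmf_component[of "{..<M}" j False "\<lambda>_. bernoulli_pmf p" "\<lambda>x. x"] assms
    by (simp add: bool_sets)
  then show "measure_pmf.prob (Pi_pmf {..<M} False (\<lambda>_. bernoulli_pmf p)) {row. row j} = p"
    using assms by (simp add: measure_pmf_single)
  have "measure_pmf.prob (Pi_pmf {..<M} False (\<lambda>_. bernoulli_pmf p)) {row. \<not> row j}
      = measure_pmf.prob (bernoulli_pmf p) {False}"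
    using prob_Pi_pmf_component[of "{..<M}" j False "\<lambda>_. bernoulli_pmf p" Not] assms
    by (simp add: bool_sets)
  then show "measure_pmf.prob (Pi_pmf {..<M} False (\<lambda>_. bernoulli_pmf p)) {row. \<not> row j} = 1 - p"
    using assms by (simp add: measure_pmf_single)
qed

lemma expected_perturbed_ones:
  assumes "j < M" "adopters N X \<noteq> {}"
  defines "D \<equiv> real (card (adopters N X))"
  shows "(\<Sum>i\<in>adopters N X. measure_pmf.prob (Pi_pmf {..<M} False (\<lambda>_. bernoulli_pmf (keep_prob \<epsilon>)))
            {row. row j \<longleftrightarrow> X i = Some j})
         = D * perturbed_mean \<epsilon> (real (card (adopters_of N X j)) / D)"
proof -
  let ?p = "keep_prob \<epsilon>"
  have "measure_pmf.prob (Pi_pmf {..<M} False (\<lambda>_. bernoulli_pmf ?p)) {row. row j \<longleftrightarrow> X i = Some j}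
      = (if i \<in> adopters_of N X j then ?p else 1 - ?p)" if "i \<in> adopters N X" for i
    using that prob_bernoulli_row[OF assms(1) keep_prob_bounds] by (auto simp: adopters_of_def adopters_def)
  then have "(\<Sum>i\<in>adopters N X. measure_pmf.prob (Pi_pmf {..<M} False (\<lambda>_. bernoulli_pmf ?p))
                {row. row j \<longleftrightarrow> X i = Some j})
      = ?p * card (adopters_of N X j) + (1 - ?p) * card (adopters N X - adopters_of N X j)"
    using adopters_of_subset[of N X j] by (simp add: sum.If_cases Int_absorb1 Diff_eq[symmetric])
  also have "\<dots> = D * perturbed_mean \<epsilon> (real (card (adopters_of N X j)) / D)"
    using assms(2) card_adopters_of_le[of N X j]
    by (simp add: D_def perturbed_mean_def card_Diff_subset adopters_of_subset of_nat_diff field_simps)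
  finally show ?thesis .
qed

lemma perturb_concentration:
  assumes "adopters N X \<noteq> {}" "0 < \<tau>" "\<tau> \<le> 2"
  defines "D \<equiv> real (card (adopters N X))"
  shows "measure_pmf.prob (perturb_pmf N M \<epsilon> X)
           {v. \<forall>j\<in>{..<M}. \<bar>real (card {i\<in>adopters N X. v i j}) / D
                 - perturbed_mean \<epsilon> (real (card (adopters_of N X j)) / D)\<bar> < \<tau>}
         \<ge> 1 - real M * (2 * exp (- \<tau>\<^sup>2 * D / 4))"
proof -
  define R where "R = (\<lambda>i::nat. Pi_pmf {..<M} False (\<lambda>_. bernoulli_pmf (keep_prob \<epsilon>)))"
  define m where "m j = D * perturbed_mean \<epsilon> (real (card (adopters_of N X j)) / D)" for j
  have "D > 0" using assms(1) by (simp add: D_def card_gt_0_iff)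
  have fail: "measure_pmf.prob (perturb_pmf N M \<epsilon> X)
      {v. \<not> \<bar>real (card {i\<in>adopters N X. v i j}) / D - m j / D\<bar> < \<tau>} \<le> 2 * exp (- \<tau>\<^sup>2 * D / 4)"
    if "j < M" for j
  proof -
    have mean: "(\<Sum>i\<in>adopters N X. measure_pmf.prob (R i) {row. row j \<longleftrightarrow> X i = Some j}) = m j"
      using expected_perturbed_ones[OF that assms(1), of \<epsilon>] by (simp add: R_def m_def D_def)
    have "m j \<le> D"
      unfolding mean[symmetric] D_def by (rule order.trans[OF sum_mono[of _ _ "\<lambda>_. 1"]]) auto
    have "{i\<in>adopters N X. if keep i j then X i = Some j else X i \<noteq> Some j}
        = {i\<in>adopters N X. keep i j \<longleftrightarrow> X i = Some j}" for keep
      by auto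
    moreover have "\<not> \<bar>c / D - m j / D\<bar> < \<tau> \<longleftrightarrow> \<bar>c - m j\<bar> \<ge> \<tau> * D" for c
      using \<open>D > 0\<close> by (simp add: diff_divide_distrib[symmetric] abs_divide pos_divide_less_eq not_less)
    ultimately have "measure_pmf.prob (perturb_pmf N M \<epsilon> X)
            {v. \<not> \<bar>real (card {i\<in>adopters N X. v i j}) / D - m j / D\<bar> < \<tau>}
        = measure_pmf.prob (Pi_pmf (adopters N X) (\<lambda>_. False) R)
            {keep. \<bar>real (card {i\<in>adopters N X. keep i j \<longleftrightarrow> X i = Some j}) - m j\<bar> \<ge> \<tau> * D}"
      by (simp add: perturb_pmf_def R_def vimage_def)
    also have "\<dots> \<le> 2 * exp (- (\<tau> * D)\<^sup>2 / (4 * D))"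
      using Chernoff_Pi_pmf_abs[of "adopters N X" R "\<lambda>i row. row j \<longleftrightarrow> X i = Some j" D "\<tau> * D" "\<lambda>_. False"]
        mean \<open>D > 0\<close> \<open>m j \<le> D\<close> assms(2,3)
      by simp
    also have "- (\<tau> * D)\<^sup>2 / (4 * D) = - \<tau>\<^sup>2 * D / 4"
      using \<open>D > 0\<close> by (simp add: power2_eq_square)
    finally show ?thesis .
  qed
  have "measure_pmf.prob (perturb_pmf N M \<epsilon> X)
      {v. \<forall>j\<in>{..<M}. \<bar>real (card {i\<in>adopters N X. v i j}) / D - m j / D\<bar> < \<tau>}
      \<ge> 1 - real (card {..<M}) * (2 * exp (- \<tau>\<^sup>2 * D / 4))"
    by (rule prob_Ball_ge) (use fail in auto)
  then show ?thesis using \<open>D > 0\<close> by (simp add: m_def)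
qed

section \<open>Sampling by random-walk tokens\<close>

definition token_hits :: "nat \<Rightarrow> nat \<Rightarrow> (nat \<Rightarrow> nat option) \<Rightarrow> (nat \<times> nat \<Rightarrow> nat) \<Rightarrow> nat \<Rightarrow> nat set \<Rightarrow> nat"
  where "token_hits N K X e k S = card {\<tau>\<in>tokens N K X. e \<tau> = k \<and> fst \<tau> \<in> S}"

lemma Lam_eq_token_hits:
  "Lam N K X v e k j = real (token_hits N K X e k {i\<in>adopters N X. v i j})
                       / real (token_hits N K X e k (adopters N X))"
proof -
  have "{\<tau>\<in>tokens N K X. e \<tau> = k \<and> fst \<tau> \<in> {i\<in>adopters N X. v i j}}
      = {\<tau>\<in>tokens N K X. e \<tau> = k \<and> v (fst \<tau>) j}"
    "{\<tau>\<in>tokens N K X. e \<tau> = k \<and> fst \<tau> \<in> adopters N X} = {\<tau>\<in>tokens N K X. e \<tau> = k}"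
    by (auto simp: tokens_def)
  then show ?thesis by (simp add: Lam_def token_hits_def)
qed

lemma sum_tokens: "(\<Sum>\<tau>\<in>tokens N K X. f (fst \<tau>)) = real K * (\<Sum>i\<in>adopters N X. f i)"
proof -
  have "(\<Sum>\<tau>\<in>tokens N K X. f (fst \<tau>)) = (\<Sum>i\<in>adopters N X. \<Sum>t\<in>{..<K}. f i)"
    unfolding tokens_def by (subst sum.cartesian_product) (simp add: case_prod_unfold)
  then show ?thesis by (simp add: sum_distrib_left)
qed

lemma walk_mass_close:
  assumes "mixing E N L" "S \<subseteq> {..<N}" "k < N"
  shows "\<bar>(\<Sum>i\<in>S. pmf (walk E N L i) k) - real (card S) / real N\<bar> \<le> real (card S) / real N ^ 3"
proof -
  have "\<bar>pmf (walk E N L i) k - 1 / real N\<bar> \<le> 1 / real N ^ 3" if "i \<in> S" for i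
    using assms that unfolding mixing_def abs_le_iff by force
  then have "\<bar>\<Sum>i\<in>S. pmf (walk E N L i) k - 1 / real N\<bar> \<le> real (card S) * (1 / real N ^ 3)"
    by (intro order.trans[OF sum_abs] sum_bounded_above) auto
  then show ?thesis by (simp add: sum_subtractf)
qed

lemma token_hits_concentration:
  assumes "S \<subseteq> adopters N X" "real K * (\<Sum>i\<in>S. pmf (walk E N L i) k) \<le> m'" "0 < t" "t \<le> 2 * m'"
  shows "measure_pmf.prob (endpoints_pmf E N L K X)
           {e. \<bar>real (token_hits N K X e k S) - real K * (\<Sum>i\<in>S. pmf (walk E N L i) k)\<bar> \<ge> t}
         \<le> 2 * exp (- t\<^sup>2 / (4 * m'))"
proof -
  define P where "P = (\<lambda>(i::nat, _::nat). walk E N L i)"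
  define F where "F \<tau> y \<longleftrightarrow> y = k \<and> fst \<tau> \<in> S" for \<tau> :: "nat \<times> nat" and y
  have "(\<Sum>\<tau>\<in>tokens N K X. measure_pmf.prob (P \<tau>) {y. F \<tau> y})
      = (\<Sum>\<tau>\<in>tokens N K X. (\<lambda>i. if i \<in> S then pmf (walk E N L i) k else 0) (fst \<tau>))"
    by (intro sum.cong) (auto simp: P_def F_def measure_pmf_single)
  also have "\<dots> = real K * (\<Sum>i\<in>adopters N X. if i \<in> S then pmf (walk E N L i) k else 0)"
    by (rule sum_tokens)
  also have "\<dots> = real K * (\<Sum>i\<in>S. pmf (walk E N L i) k)"
    using assms(1) by (simp add: sum.If_cases Int_absorb1)
  finally have mean: "(\<Sum>\<tau>\<in>tokens N K X. measure_pmf.prob (P \<tau>) {y. F \<tau> y})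
      = real K * (\<Sum>i\<in>S. pmf (walk E N L i) k)" .
  show ?thesis
    using Chernoff_Pi_pmf_abs[of "tokens N K X" P F m' t 0, unfolded mean] assms(2-4)
    by (simp add: endpoints_pmf_def P_def F_def token_hits_def)
qed

lemma ratio_close:
  fixes A n B \<rho> \<eta> :: real
  assumes "B > 0" "0 \<le> \<rho>" "\<rho> \<le> 1" "0 \<le> \<eta>" "\<eta> \<le> 1/3"
    and n: "\<bar>n - B\<bar> \<le> \<eta> * B" and A: "\<bar>A - \<rho> * B\<bar> \<le> \<eta> * B"
  shows "\<bar>A / n - \<rho>\<bar> \<le> 3 * \<eta>"
proof -
  have n_ge: "n \<ge> (1 - \<eta>) * B" using n by (simp add: algebra_simps abs_le_iff)
  moreover have "(1 - \<eta>) * B > 0" using assms by simp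
  ultimately have "n > 0" by linarith
  have "A - \<rho> * n = (A - \<rho> * B) + \<rho> * (B - n)" by (simp add: algebra_simps)
  then have "\<bar>A - \<rho> * n\<bar> \<le> \<bar>A - \<rho> * B\<bar> + \<rho> * \<bar>B - n\<bar>"
    using abs_triangle_ineq[of "A - \<rho> * B" "\<rho> * (B - n)"] assms(2) by (simp add: abs_mult)
  also have "\<dots> \<le> \<eta> * B + 1 * (\<eta> * B)"
    using A n assms(2,3) by (intro add_mono mult_mono) (auto simp: abs_minus_commute)
  finally have "\<bar>A - \<rho> * n\<bar> \<le> 2 * \<eta> * B" by (simp add: mult.commute mult.left_commute)
  have "\<bar>A / n - \<rho>\<bar> = \<bar>A - \<rho> * n\<bar> / n" using \<open>n > 0\<close> by (simp add: field_simps)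
  also have "\<dots> \<le> 2 * \<eta> * B / ((1 - \<eta>) * B)"
    using \<open>\<bar>A - \<rho> * n\<bar> \<le> 2 * \<eta> * B\<close> n_ge \<open>(1 - \<eta>) * B > 0\<close> assms(1,4)
    by (intro frac_le) auto
  also have "\<dots> = 2 * \<eta> / (1 - \<eta>)" using assms(1) by simp
  also have "\<dots> \<le> 3 * \<eta>"
    using assms(4,5) mult_left_mono[of "\<eta> * 3" 1 \<eta>] by (simp add: field_simps)
  finally show ?thesis .
qed

lemma token_mean_close:
  assumes "mixing E N L" "S \<subseteq> adopters N X" "k < N"
  shows "\<bar>real K * (\<Sum>i\<in>S. pmf (walk E N L i) k) - real K * real (card S) / real N\<bar>
           \<le> real K * real (card (adopters N X)) / real N ^ 3"
proof -
  have S: "S \<subseteq> {..<N}" using assms(2) by (auto simp: adopters_def)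
  have "real K * (\<Sum>i\<in>S. pmf (walk E N L i) k) - real K * real (card S) / real N
      = real K * ((\<Sum>i\<in>S. pmf (walk E N L i) k) - real (card S) / real N)"
    by (simp add: algebra_simps)
  then have "\<bar>real K * (\<Sum>i\<in>S. pmf (walk E N L i) k) - real K * real (card S) / real N\<bar>
      = real K * \<bar>(\<Sum>i\<in>S. pmf (walk E N L i) k) - real (card S) / real N\<bar>"
    by (simp add: abs_mult)
  also have "\<dots> \<le> real K * (real (card S) / real N ^ 3)"
    using walk_mass_close[OF assms(1) S assms(3)] by (intro mult_left_mono) auto
  also have "\<dots> \<le> real K * (real (card (adopters N X)) / real N ^ 3)"
    using card_mono[OF _ assms(2)] by (intro mult_left_mono divide_right_mono) auto
  finally show ?thesis by simp
qed

lemma token_hits_deviation: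
  assumes "mixing E N L" "N \<ge> 1" "K \<ge> 1" "adopters N X \<noteq> {}" "S \<subseteq> adopters N X" "k < N"
    and "0 < \<theta>" "\<theta> \<le> 1"
  defines "B \<equiv> real K * real (card (adopters N X)) / real N"
  shows "measure_pmf.prob (endpoints_pmf E N L K X)
           {e. \<theta> * B \<le> \<bar>real (token_hits N K X e k S) - real K * (\<Sum>i\<in>S. pmf (walk E N L i) k)\<bar>}
         \<le> 2 * exp (- \<theta>\<^sup>2 * B / 8)"
proof -
  have "B > 0" using assms(2-4) by (simp add: B_def card_gt_0_iff)
  have "real K * real (card S) / real N \<le> B"
    using card_mono[OF _ assms(5)] by (auto simp: B_def intro!: divide_right_mono mult_left_mono)
  moreover have "real K * real (card (adopters N X)) / real N ^ 3 \<le> B"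
    unfolding B_def using power_increasing[of 1 3 "real N"] assms(2)
    by (intro divide_left_mono) auto
  ultimately have "real K * (\<Sum>i\<in>S. pmf (walk E N L i) k) \<le> 2 * B"
    using token_mean_close[OF assms(1,5,6), of K] by (simp add: abs_le_iff)
  then have "measure_pmf.prob (endpoints_pmf E N L K X)
      {e. \<theta> * B \<le> \<bar>real (token_hits N K X e k S) - real K * (\<Sum>i\<in>S. pmf (walk E N L i) k)\<bar>}
      \<le> 2 * exp (- (\<theta> * B)\<^sup>2 / (4 * (2 * B)))"
    using token_hits_concentration[OF assms(5), where m'="2 * B" and t="\<theta> * B"] assms(7,8) \<open>B > 0\<close>
    by simp
  also have "- (\<theta> * B)\<^sup>2 / (4 * (2 * B)) = - \<theta>\<^sup>2 * B / 8" using \<open>B > 0\<close> by (simp add: power2_eq_square)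
  finally show ?thesis .
qed

lemma token_ratio_close:
  assumes "S \<subseteq> adopters N X" "adopters N X \<noteq> {}" "K \<ge> 1" "N \<ge> 1" "0 \<le> \<eta>" "\<eta> \<le> 1/3"
    and hits: "\<And>T. T \<in> {S, adopters N X} \<Longrightarrow> \<bar>real (token_hits N K X e k T) - real K * real (card T) / real N\<bar>
                 \<le> \<eta> * (real K * real (card (adopters N X)) / real N)"
  shows "\<bar>real (token_hits N K X e k S) / real (token_hits N K X e k (adopters N X))
           - real (card S) / real (card (adopters N X))\<bar> \<le> 3 * \<eta>"
proof -
  define D where "D = real (card (adopters N X))"
  define B where "B = real K * D / real N"
  have "D > 0" using assms(2) by (simp add: D_def card_gt_0_iff)
  then have "B > 0" using assms(3,4) by (simp add: B_def)
  have "card S \<le> card (adopters N X)" using assms(1) by (intro card_mono) auto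
  then have \<rho>: "0 \<le> real (card S) / D" "real (card S) / D \<le> 1"
    using \<open>D > 0\<close> by (auto simp: D_def)
  have "\<bar>real (token_hits N K X e k (adopters N X)) - B\<bar> \<le> \<eta> * B"
    using hits[of "adopters N X"] assms(2) by (simp add: B_def D_def)
  moreover have "\<bar>real (token_hits N K X e k S) - real (card S) / D * B\<bar> \<le> \<eta> * B"
    using hits[of S] \<open>D > 0\<close> assms(2) by (simp add: B_def D_def mult.commute)
  ultimately show ?thesis
    unfolding D_def[symmetric] using assms(5,6) by (intro ratio_close[OF \<open>B > 0\<close> \<rho>])
qed

lemma endpoints_concentration:
  assumes mix: "mixing E N L" and "N \<ge> 1" "K \<ge> 1" "adopters N X \<noteq> {}"
    and \<theta>: "\<theta> > 0" "\<theta> + 1 / real N ^ 2 \<le> 1/3"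
  defines "D \<equiv> real (card (adopters N X))" and "B \<equiv> real K * real (card (adopters N X)) / real N"
  shows "measure_pmf.prob (endpoints_pmf E N L K X)
           {e. \<forall>k<N. \<forall>j<M. \<bar>Lam N K X v e k j - real (card {i\<in>adopters N X. v i j}) / D\<bar>
                             \<le> 3 * (\<theta> + 1 / real N ^ 2)}
         \<ge> 1 - real N * (real M + 1) * (2 * exp (- \<theta>\<^sup>2 * B / 8))"
proof -
  define mass where "mass S k = real K * (\<Sum>i\<in>S. pmf (walk E N L i) k)" for S k
  define Ss where "Ss = insert (adopters N X) ((\<lambda>j. {i\<in>adopters N X. v i j}) ` {..<M})"
  define good where "good e \<longleftrightarrow> (\<forall>k<N. \<forall>S\<in>Ss. \<bar>real (token_hits N K X e k S) - mass S k\<bar> < \<theta> * B)"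
    for e
  have "0 \<le> 1 / real N ^ 2" by simp
  with \<theta>(2) have "\<theta> \<le> 1/3" by linarith
  have Ss_sub: "S \<subseteq> adopters N X" if "S \<in> Ss" for S using that by (auto simp: Ss_def)
  have mass_close: "\<bar>mass S k - real K * real (card S) / real N\<bar> \<le> B / real N ^ 2"
    if "S \<in> Ss" "k < N" for S k
    using token_mean_close[OF mix Ss_sub[OF that(1)] that(2), of K] assms(2)
    by (simp add: mass_def B_def power3_eq_cube power2_eq_square)
  have fail: "measure_pmf.prob (endpoints_pmf E N L K X)
      {e. \<not> \<bar>real (token_hits N K X e k S) - mass S k\<bar> < \<theta> * B} \<le> 2 * exp (- \<theta>\<^sup>2 * B / 8)"
    if "S \<in> Ss" "k < N" for S k
    using token_hits_deviation[OF mix assms(2-4) Ss_sub[OF that(1)] that(2) \<theta>(1)] \<open>\<theta> \<le> 1/3\<close>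
    by (simp add: mass_def B_def not_less)
  have "card Ss \<le> Suc (card ((\<lambda>j. {i\<in>adopters N X. v i j}) ` {..<M}))"
    by (simp add: Ss_def card_insert_if)
  also have "\<dots> \<le> M + 1" using card_image_le[of "{..<M}"] by simp
  finally have "real (card ({..<N} \<times> Ss)) * (2 * exp (- \<theta>\<^sup>2 * B / 8))
      \<le> real N * (real M + 1) * (2 * exp (- \<theta>\<^sup>2 * B / 8))"
    by (intro mult_right_mono) (simp_all add: card_cartesian_product mult_left_mono)
  moreover have "measure_pmf.prob (endpoints_pmf E N L K X) {e. good e}
      \<ge> 1 - real (card ({..<N} \<times> Ss)) * (2 * exp (- \<theta>\<^sup>2 * B / 8))"
  proof -
    have "{e. good e} = {e. \<forall>kS\<in>{..<N} \<times> Ss.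
        \<bar>real (token_hits N K X e (fst kS) (snd kS)) - mass (snd kS) (fst kS)\<bar> < \<theta> * B}"
      by (auto simp: good_def)
    then show ?thesis by (simp only:) (rule prob_Ball_ge; use fail in \<open>auto simp: Ss_def\<close>)
  qed
  ultimately have "measure_pmf.prob (endpoints_pmf E N L K X) {e. good e}
      \<ge> 1 - real N * (real M + 1) * (2 * exp (- \<theta>\<^sup>2 * B / 8))"
    by linarith
  moreover have "\<bar>Lam N K X v e k j - real (card {i\<in>adopters N X. v i j}) / D\<bar> \<le> 3 * (\<theta> + 1 / real N ^ 2)"
    if "good e" "k < N" "j < M" for e k j
  proof -
    let ?S = "{i\<in>adopters N X. v i j}"
    have hits_close: "\<bar>real (token_hits N K X e k S) - real K * real (card S) / real N\<bar>
        \<le> (\<theta> + 1 / real N ^ 2) * B" if "S \<in> Ss" for S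
    proof -
      have "\<bar>real (token_hits N K X e k S) - mass S k\<bar> < \<theta> * B"
        using \<open>good e\<close> \<open>k < N\<close> that by (simp add: good_def)
      then show ?thesis
        using mass_close[OF that \<open>k < N\<close>] by (simp add: distrib_right abs_le_iff abs_less_iff)
    qed
    show ?thesis
      unfolding Lam_eq_token_hits D_def
    proof (rule token_ratio_close[OF _ assms(4,3,2)])
      show "0 \<le> \<theta> + 1 / real N ^ 2" using \<theta>(1) by simp
      fix T assume "T \<in> {?S, adopters N X}"
      then show "\<bar>real (token_hits N K X e k T) - real K * real (card T) / real N\<bar>
          \<le> (\<theta> + 1 / real N ^ 2) * (real K * real (card (adopters N X)) / real N)"
        using hits_close[of T] \<open>j < M\<close> by (auto simp: Ss_def B_def)
    qed (use \<theta>(2) in auto)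
  qed
  ultimately show ?thesis
    by (elim order.trans) (intro measure_pmf.finite_measure_mono; auto)
qed

section \<open>Debiasing and normalisation\<close>

definition debias_scale :: "real \<Rightarrow> real" where
  "debias_scale \<epsilon> = (exp (\<epsilon> / 2) + 1) / (exp (\<epsilon> / 2) - 1)"

lemma debias_scale_pos: "\<epsilon> > 0 \<Longrightarrow> debias_scale \<epsilon> > 0"
  by (simp add: debias_scale_def add_pos_pos)

lemma debias_perturbed_mean:
  assumes "\<epsilon> > 0"
  shows "debias_scale \<epsilon> * perturbed_mean \<epsilon> q - 1 / (exp (\<epsilon> / 2) - 1) = q"
proof -
  define e where "e = exp (\<epsilon> / 2)"
  have "e > 1" using assms by (simp add: e_def)
  then have "e - 1 \<noteq> 0" "e + 1 \<noteq> 0" by auto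
  have "keep_prob \<epsilon> = e / (e + 1)" "1 - keep_prob \<epsilon> = 1 / (e + 1)"
    using \<open>e + 1 \<noteq> 0\<close> by (simp_all add: keep_prob_def e_def[symmetric] field_simps)
  then have "perturbed_mean \<epsilon> q = (e * q + (1 - q)) / (e + 1)"
    by (simp add: perturbed_mean_def add_divide_distrib)
  then have "debias_scale \<epsilon> * perturbed_mean \<epsilon> q = (e * q + (1 - q)) / (e - 1)"
    using \<open>e + 1 \<noteq> 0\<close> by (simp add: debias_scale_def e_def[symmetric])
  then show ?thesis
    using \<open>e - 1 \<noteq> 0\<close> by (simp add: e_def[symmetric] field_simps)
qed

lemma Qtilde_close:
  assumes "\<epsilon> > 0" "q \<ge> 0"
  shows "\<bar>Qtilde \<epsilon> x - q\<bar> \<le> debias_scale \<epsilon> * \<bar>x - perturbed_mean \<epsilon> q\<bar>"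
proof -
  have "Qtilde \<epsilon> x = max (debias_scale \<epsilon> * x - 1 / (exp (\<epsilon> / 2) - 1)) 0"
    by (simp add: Qtilde_def debias_scale_def)
  then have "\<bar>Qtilde \<epsilon> x - q\<bar> \<le> \<bar>debias_scale \<epsilon> * x - 1 / (exp (\<epsilon> / 2) - 1) - q\<bar>"
    using assms(2) by auto
  also have "debias_scale \<epsilon> * x - 1 / (exp (\<epsilon> / 2) - 1) - q = debias_scale \<epsilon> * (x - perturbed_mean \<epsilon> q)"
    using debias_perturbed_mean[OF assms(1), of q] by (simp add: algebra_simps)
  finally show ?thesis
    using debias_scale_pos[OF assms(1)] by (simp add: abs_mult)
qed

lemma sim_iff:
  assumes "b > 0" "c > 0"
  shows "sim c a b \<longleftrightarrow> b \<le> c * a \<and> a \<le> c * b"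
  using assms by (simp add: sim_def field_simps)

lemma sim_div_of_close:
  fixes T s Q a \<Delta> w v :: real
  assumes Q: "a \<le> Q" "a > 0" and T: "\<bar>T - Q\<bar> \<le> \<Delta>" and s: "\<bar>s - 1\<bar> \<le> v"
    and "0 \<le> \<Delta>" "0 \<le> v" and w: "2 * \<Delta> / a + 2 * v \<le> w" "w \<le> 1"
  shows "sim (1 + w) (T / s) Q"
proof -
  define u where "u = \<Delta> / a"
  have "0 \<le> u" "u * Q \<ge> \<Delta>"
    using Q \<open>0 \<le> \<Delta>\<close> mult_left_mono[of a Q \<Delta>] by (auto simp: u_def field_simps mult.commute)
  have "2 * u + 2 * v \<le> w" using w by (simp add: u_def)
  have "v \<le> 1/2" using w \<open>0 \<le> u\<close> by (simp add: u_def)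
  have "Q > 0" "s > 0" using Q s \<open>v \<le> 1/2\<close> by (auto simp: abs_le_iff)
  have T_bounds: "T \<le> (1 + u) * Q" "(1 - u) * Q \<le> T"
    using T \<open>u * Q \<ge> \<Delta>\<close> by (auto simp: algebra_simps abs_le_iff)
  have s_bounds: "1 - v \<le> s" "s \<le> 1 + v" using s by (auto simp: abs_le_iff)
  have "(1 + u) * Q \<le> (1 + w) * (1 - v) * Q"
    using \<open>2 * u + 2 * v \<le> w\<close> \<open>w \<le> 1\<close> \<open>0 \<le> u\<close> \<open>0 \<le> v\<close> \<open>Q > 0\<close> mult_right_mono[of w 1 v]
    by (intro mult_right_mono) (auto simp: algebra_simps)
  also have "\<dots> \<le> (1 + w) * s * Q"
    using s_bounds \<open>Q > 0\<close> \<open>2 * u + 2 * v \<le> w\<close> \<open>0 \<le> u\<close> \<open>0 \<le> v\<close>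
    by (intro mult_right_mono mult_left_mono) auto
  finally have upper: "T \<le> (1 + w) * (s * Q)" using T_bounds by (simp add: algebra_simps)
  have "(1 + v) * Q \<le> (1 + w) * (1 - u) * Q"
    using \<open>2 * u + 2 * v \<le> w\<close> \<open>w \<le> 1\<close> \<open>0 \<le> u\<close> \<open>0 \<le> v\<close> \<open>Q > 0\<close> mult_right_mono[of w 1 u]
    by (intro mult_right_mono) (auto simp: algebra_simps)
  also have "\<dots> \<le> (1 + w) * T"
    using T_bounds \<open>2 * u + 2 * v \<le> w\<close> \<open>0 \<le> u\<close> \<open>0 \<le> v\<close>
    by (simp add: mult.assoc mult_left_mono)
  finally have lower: "s * Q \<le> (1 + w) * T"
    using s_bounds \<open>Q > 0\<close> mult_right_mono[of s "1 + v" Q] by linarith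
  show ?thesis
    using upper lower \<open>Q > 0\<close> \<open>s > 0\<close> \<open>2 * u + 2 * v \<le> w\<close> \<open>0 \<le> u\<close> \<open>0 \<le> v\<close>
    by (simp add: sim_iff field_simps)
qed

lemma Qhat_of_sim:
  assumes "\<epsilon> > 0" "j < M"
    and lam: "\<And>j. j < M \<Longrightarrow> \<bar>lam j - perturbed_mean \<epsilon> (Q j)\<bar> \<le> \<tau>"
    and Q: "\<And>j. j < M \<Longrightarrow> a \<le> Q j" "a > 0" "(\<Sum>j<M. Q j) = 1" and "\<tau> \<ge> 0"
    and w: "2 * (debias_scale \<epsilon> * \<tau>) / a + 2 * real M * (debias_scale \<epsilon> * \<tau>) \<le> w" "w \<le> 1"
  shows "sim (1 + w) (Qhat_of M \<epsilon> lam j) (Q j)"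
proof -
  define \<Delta> where "\<Delta> = debias_scale \<epsilon> * \<tau>"
  define s where "s = (\<Sum>j<M. Qtilde \<epsilon> (lam j))"
  have "\<Delta> \<ge> 0" using debias_scale_pos[OF assms(1)] \<open>\<tau> \<ge> 0\<close> by (simp add: \<Delta>_def)
  have close: "\<bar>Qtilde \<epsilon> (lam j) - Q j\<bar> \<le> \<Delta>" if "j < M" for j
  proof -
    have "\<bar>Qtilde \<epsilon> (lam j) - Q j\<bar> \<le> debias_scale \<epsilon> * \<bar>lam j - perturbed_mean \<epsilon> (Q j)\<bar>"
      using Qtilde_close[OF assms(1)] Q(1)[OF that] \<open>a > 0\<close> by simp
    also have "\<dots> \<le> \<Delta>"
      using lam[OF that] debias_scale_pos[OF assms(1)] by (simp add: \<Delta>_def)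
    finally show ?thesis .
  qed
  have "\<bar>s - 1\<bar> = \<bar>\<Sum>j<M. Qtilde \<epsilon> (lam j) - Q j\<bar>"
    by (simp add: s_def sum_subtractf Q(3))
  also have "\<dots> \<le> (\<Sum>j<M. \<bar>Qtilde \<epsilon> (lam j) - Q j\<bar>)" by (rule sum_abs)
  also have "\<dots> \<le> (\<Sum>j<M. \<Delta>)" using close by (intro sum_mono) auto
  finally have s: "\<bar>s - 1\<bar> \<le> real M * \<Delta>" by simp
  have w': "2 * \<Delta> / a + 2 * (real M * \<Delta>) \<le> w" using w(1) by (simp add: \<Delta>_def)
  have "sim (1 + w) (Qtilde \<epsilon> (lam j) / s) (Q j)"
    by (rule sim_div_of_close[OF Q(1)[OF \<open>j < M\<close>] \<open>a > 0\<close> close[OF \<open>j < M\<close>] s \<open>\<Delta> \<ge> 0\<close> _ w' w(2)])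
       (use \<open>\<Delta> \<ge> 0\<close> in simp)
  moreover have "s \<noteq> 0"
  proof -
    have "0 \<le> 2 * \<Delta> / a" using \<open>a > 0\<close> \<open>\<Delta> \<ge> 0\<close> by simp
    then have "real M * \<Delta> < 1" using w' w(2) by linarith
    then show ?thesis using s by auto
  qed
  ultimately show ?thesis by (simp add: Qhat_of_def s_def Let_def)
qed

lemma sim_mean:
  assumes "\<And>k. k < N \<Longrightarrow> sim c (f k) q" "q > 0" "c > 0" "N > 0"
  shows "sim c ((1 / real N) * (\<Sum>k<N. f k)) q"
proof -
  have lo: "q \<le> c * f k" and hi: "f k \<le> c * q" if "k < N" for k
    using assms(1)[OF that] assms(2,3) by (simp_all add: sim_iff)
  have "(\<Sum>k<N. q) \<le> (\<Sum>k<N. c * f k)" "(\<Sum>k<N. f k) \<le> (\<Sum>k<N. c * q)"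
    using lo hi by (intro sum_mono; simp)+
  then have "real N * q \<le> c * (\<Sum>k<N. f k)" "(\<Sum>k<N. f k) \<le> real N * (c * q)"
    by (simp_all add: sum_distrib_left)
  then show ?thesis using assms(2-4) by (simp add: sim_iff field_simps)
qed

definition stochastic_rows :: "nat \<Rightarrow> (nat \<Rightarrow> nat \<Rightarrow> real) \<Rightarrow> bool" where
  "stochastic_rows M Qh \<longleftrightarrow> (\<forall>i. (\<forall>j<M. 0 \<le> Qh i j) \<and> (\<Sum>j<M. Qh i j) = 1)"

lemma stochastic_rows_Qhat_of:
  assumes "M \<ge> 1"
  shows "stochastic_rows M (\<lambda>k. Qhat_of M \<epsilon> (lam k))"
  unfolding stochastic_rows_def
proof (rule allI, rule conjI)
  fix k
  define s where "s = (\<Sum>j<M. Qtilde \<epsilon> (lam k j))"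
  have "Qtilde \<epsilon> x \<ge> 0" for x by (simp add: Qtilde_def)
  moreover from this have "s \<ge> 0" unfolding s_def by (intro sum_nonneg)
  ultimately show "\<forall>j<M. 0 \<le> Qhat_of M \<epsilon> (lam k) j"
    by (auto simp: Qhat_of_def Let_def s_def[symmetric])
  show "(\<Sum>j<M. Qhat_of M \<epsilon> (lam k) j) = 1"
  proof (cases "s = 0")
    case True
    then show ?thesis using assms by (simp add: Qhat_of_def Let_def s_def[symmetric])
  next
    case False
    then have "(\<Sum>j<M. Qhat_of M \<epsilon> (lam k) j) = s / s"
      by (simp add: Qhat_of_def Let_def s_def[symmetric] sum_divide_distrib[symmetric])
    then show ?thesis using False by simp
  qed
qed

lemma stochastic_rows_Qhat_round:
  assumes "M \<ge> 1" "Qh \<in> set_pmf (Qhat_round E N L M \<epsilon> K r X)"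
  shows "stochastic_rows M Qh"
proof (cases "r = 1")
  case True
  then show ?thesis using assms by (simp add: Qhat_round_def stochastic_rows_def)
next
  case False
  then obtain v e where "Qh = (\<lambda>k. Qhat_of M \<epsilon> (Lam N K X v e k))"
    using assms(2) by (auto simp: Qhat_round_def est_pmf_def)
  then show ?thesis using stochastic_rows_Qhat_of[OF assms(1)] by simp
qed

section \<open>Adoption\<close>

definition agent_choice_pmf :: "nat \<Rightarrow> real \<Rightarrow> real \<Rightarrow> (nat \<Rightarrow> bool) \<Rightarrow> (nat \<Rightarrow> real) \<Rightarrow> nat option pmf"
  where "agent_choice_pmf M \<mu> \<beta> \<Phi> q =
    bind_pmf (select_pmf M \<mu> q) (\<lambda>j.
      map_pmf (\<lambda>a. if a then Some j else None) (bernoulli_pmf (if \<Phi> j then \<beta> else 1 - \<beta>)))"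

lemma adopt_pmf_eq:
  "adopt_pmf N M \<mu> \<beta> \<eta> Qh = bind_pmf (Pi_pmf {..<M} False (\<lambda>j. bernoulli_pmf (\<eta> j)))
     (\<lambda>\<Phi>. Pi_pmf {..<N} None (\<lambda>i. agent_choice_pmf M \<mu> \<beta> \<Phi> (Qh i)))"
  by (simp add: adopt_pmf_def agent_choice_pmf_def)

lemma pmf_select_pmf:
  assumes "stochastic_rows M Qh" "0 \<le> \<mu>" "\<mu> \<le> 1" "M \<ge> 1"
  shows "pmf (select_pmf M \<mu> (Qh i)) j = (if j < M then (1 - \<mu>) * Qh i j + \<mu> / real M else 0)"
proof -
  define f where "f = (\<lambda>x. if x < M then (1 - \<mu>) * Qh i x + \<mu> / real M else 0)"
  have nonneg: "\<And>x. 0 \<le> f x" using assms by (simp add: f_def stochastic_rows_def)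
  have "(\<Sum>x<M. f x) = (1 - \<mu>) * (\<Sum>x<M. Qh i x) + \<mu>"
    using assms(4) by (simp add: f_def sum.distrib sum_distrib_left)
  then have "(\<Sum>x<M. f x) = 1" using assms(1) by (simp add: stochastic_rows_def)
  moreover have "(\<integral>\<^sup>+x. ennreal (f x) \<partial>count_space UNIV) = (\<Sum>x<M. ennreal (f x))"
    by (rule nn_integral_count_space') (auto simp: f_def)
  ultimately have "(\<integral>\<^sup>+x. ennreal (f x) \<partial>count_space UNIV) = 1"
    using nonneg by (simp add: sum_ennreal)
  then have "pmf (embed_pmf f) j = f j" by (intro pmf_embed_pmf nonneg)
  then show ?thesis by (simp add: select_pmf_def f_def)
qed

lemma prob_map_bernoulli_Some:
  assumes "0 \<le> b" "b \<le> 1"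
  shows "measure_pmf.prob (map_pmf (\<lambda>a. if a then Some j else None) (bernoulli_pmf b)) {y. y = Some j} = b"
    and "measure_pmf.prob (map_pmf (\<lambda>a. if a then Some j else None) (bernoulli_pmf b)) {y. y \<noteq> None} = b"
proof -
  have "(\<lambda>a. if a then Some j else None) -` {y. y = Some j} = {True}"
    "(\<lambda>a. if a then Some j else None) -` {y. y \<noteq> None} = {True}"
    by (auto split: if_splits)
  then show "measure_pmf.prob (map_pmf (\<lambda>a. if a then Some j else None) (bernoulli_pmf b)) {y. y = Some j} = b"
    and "measure_pmf.prob (map_pmf (\<lambda>a. if a then Some j else None) (bernoulli_pmf b)) {y. y \<noteq> None} = b"
    using assms by (simp_all only: measure_map_pmf) (simp_all add: measure_pmf_single)
qed

lemma agent_choice_adopts: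
  assumes "1/2 \<le> \<beta>" "\<beta> \<le> 1"
  shows "measure_pmf.prob (agent_choice_pmf M \<mu> \<beta> \<Phi> q) {y. y \<noteq> None} \<ge> 1 - \<beta>"
proof -
  have "measure_pmf.prob (map_pmf (\<lambda>a. if a then Some j else None)
          (bernoulli_pmf (if \<Phi> j then \<beta> else 1 - \<beta>))) {y. y \<noteq> None} \<ge> 1 - \<beta>" for j
    using prob_map_bernoulli_Some(2)[of "if \<Phi> j then \<beta> else 1 - \<beta>" j] assms by auto
  then show ?thesis
    unfolding agent_choice_pmf_def using assms by (intro prob_bind_pmf_ge_uniform) auto
qed

lemma expectation_ge_pmf:
  fixes g :: "'a \<Rightarrow> real"
  assumes "\<And>y. 0 \<le> g y" "\<And>y. g y \<le> B"
  shows "pmf p x * g x \<le> measure_pmf.expectation p g"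
proof -
  have "measure_pmf.expectation p (\<lambda>y. g x * indicator {x} y) \<le> measure_pmf.expectation p g"
    using assms by (intro integral_mono measure_pmf.integrable_const_bound[where B="\<bar>g x\<bar>"]
        measure_pmf.integrable_const_bound[where B=B]) (auto simp: indicator_def)
  then show ?thesis by (simp add: measure_pmf_single mult.commute)
qed

lemma agent_choice_adopts_option:
  assumes "stochastic_rows M Qh" "0 < \<mu>" "\<mu> < 1" "1/2 \<le> \<beta>" "\<beta> \<le> 1" "j < M"
  shows "measure_pmf.prob (agent_choice_pmf M \<mu> \<beta> \<Phi> (Qh i)) {y. y = Some j} \<ge> \<mu> * (1 - \<beta>) / real M"
proof -
  let ?b = "if \<Phi> j then \<beta> else 1 - \<beta>"
  let ?g = "\<lambda>j'. measure_pmf.prob (map_pmf (\<lambda>a. if a then Some j' else None)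
                (bernoulli_pmf (if \<Phi> j' then \<beta> else 1 - \<beta>))) {y. y = Some j}"
  have "?g j = ?b" by (rule prob_map_bernoulli_Some(1)) (use assms in auto)
  moreover have "pmf (select_pmf M \<mu> (Qh i)) j = (1 - \<mu>) * Qh i j + \<mu> / real M"
    using pmf_select_pmf[OF assms(1)] assms by simp
  moreover have "pmf (select_pmf M \<mu> (Qh i)) j * ?g j \<le> measure_pmf.expectation (select_pmf M \<mu> (Qh i)) ?g"
    by (rule expectation_ge_pmf[where B=1]) auto
  moreover have "measure_pmf.expectation (select_pmf M \<mu> (Qh i)) ?g
      = measure_pmf.prob (agent_choice_pmf M \<mu> \<beta> \<Phi> (Qh i)) {y. y = Some j}"
    by (simp only: agent_choice_pmf_def prob_bind_pmf)
  moreover have "\<mu> / real M * (1 - \<beta>) \<le> ((1 - \<mu>) * Qh i j + \<mu> / real M) * ?b"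
    using assms by (intro mult_mono) (auto simp: stochastic_rows_def)
  ultimately show ?thesis by simp
qed

lemma set_agent_choice_pmf:
  assumes "stochastic_rows M Qh" "0 \<le> \<mu>" "\<mu> \<le> 1" "M \<ge> 1"
    and "Some j \<in> set_pmf (agent_choice_pmf M \<mu> \<beta> \<Phi> (Qh i))"
  shows "j < M"
proof -
  obtain j' where j': "j' \<in> set_pmf (select_pmf M \<mu> (Qh i))"
    and "Some j \<in> (\<lambda>a. if a then Some j' else None) ` set_pmf (bernoulli_pmf (if \<Phi> j' then \<beta> else 1 - \<beta>))"
    using assms(5) by (auto simp: agent_choice_pmf_def)
  then have "j = j'" by (auto split: if_splits)
  then show ?thesis using j' pmf_select_pmf[OF assms(1-4)] by (auto simp: set_pmf_eq split: if_splits)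
qed

definition well_spread :: "nat \<Rightarrow> nat \<Rightarrow> real \<Rightarrow> real \<Rightarrow> (nat \<Rightarrow> nat option) \<Rightarrow> bool" where
  "well_spread N M d a X \<longleftrightarrow>
     d * real N \<le> real (card (adopters N X)) \<and> (\<forall>j<M. a * real N \<le> real (card (adopters_of N X j)))"

text \<open>Indexing the counts by \<open>nat option\<close> lets a single union bound cover the number of
  adopters (\<open>None\<close>) and the number of adopters of each option (\<open>Some j\<close>).\<close>

definition adopts :: "nat option \<Rightarrow> nat option \<Rightarrow> bool" where
  "adopts opt y \<longleftrightarrow> (case opt of None \<Rightarrow> y \<noteq> None | Some j \<Rightarrow> y = Some j)"

lemma adopts_simps:
  "adopts None = (\<lambda>y. y \<noteq> None)" "adopts (Some j) = (\<lambda>y. y = Some j)"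
  by (simp_all add: adopts_def fun_eq_iff)

lemma card_adopts:
  "card {i\<in>{..<N}. adopts None (X i)} = card (adopters N X)"
  "card {i\<in>{..<N}. adopts (Some j) (X i)} = card (adopters_of N X j)"
  by (simp_all add: adopts_simps adopters_def adopters_of_def)

lemma expected_adoptions_ge:
  assumes "stochastic_rows M Qh" "0 < \<mu>" "\<mu> < 1" "1/2 \<le> \<beta>" "\<beta> \<le> 1"
    and "opt \<in> insert None (Some ` {..<M})"
  shows "real N * (if opt = None then 1 - \<beta> else \<mu> * (1 - \<beta>) / real M)
           \<le> (\<Sum>i<N. measure_pmf.prob (agent_choice_pmf M \<mu> \<beta> \<Phi> (Qh i)) {y. adopts opt y})"
proof (cases opt)
  case None
  have "(\<Sum>i<N. 1 - \<beta>) \<le> (\<Sum>i<N. measure_pmf.prob (agent_choice_pmf M \<mu> \<beta> \<Phi> (Qh i)) {y. adopts opt y})"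
    using agent_choice_adopts assms(4,5) by (intro sum_mono) (simp add: None adopts_simps)
  then show ?thesis using None by simp
next
  case (Some j)
  then have "j < M" using assms(6) by auto
  have "(\<Sum>i<N. \<mu> * (1 - \<beta>) / real M)
      \<le> (\<Sum>i<N. measure_pmf.prob (agent_choice_pmf M \<mu> \<beta> \<Phi> (Qh i)) {y. adopts opt y})"
    using agent_choice_adopts_option[OF assms(1-5) \<open>j < M\<close>] by (intro sum_mono) (simp add: Some adopts_simps)
  then show ?thesis using Some by simp
qed

lemma adopt_pmf_well_spread:
  assumes "stochastic_rows M Qh" "M \<ge> 1" "0 < \<mu>" "\<mu> < 1" "1/2 < \<beta>" "\<beta> < 1" "N \<ge> 1"
  defines "a \<equiv> \<mu> * (1 - \<beta>) / (2 * real M)"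
  shows "measure_pmf.prob (adopt_pmf N M \<mu> \<beta> \<eta> Qh) {X. well_spread N M ((1 - \<beta>) / 2) a X}
           \<ge> 1 - (real M + 1) * exp (- a\<^sup>2 * real N / 4)"
  unfolding adopt_pmf_eq
proof (rule prob_bind_pmf_ge_uniform)
  fix \<Phi>
  let ?Q = "Pi_pmf {..<N} None (\<lambda>i. agent_choice_pmf M \<mu> \<beta> \<Phi> (Qh i))"
  define m where "m opt = (\<Sum>i<N. measure_pmf.prob (agent_choice_pmf M \<mu> \<beta> \<Phi> (Qh i)) {y. adopts opt y})" for opt
  define J where "J = insert None (Some ` {..<M})"
  have "a > 0" using assms by (simp add: a_def adopts_simps)
  have "\<mu> * (1 - \<beta>) \<le> real M * (1 - \<beta>)" using assms by (intro mult_right_mono) auto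
  then have "a \<le> (1 - \<beta>) / 2" using assms(2) by (simp add: a_def field_simps)
  have "m opt \<le> (\<Sum>i<N. 1)" for opt unfolding m_def by (intro sum_mono) auto
  then have m_le: "m opt \<le> real N" for opt by simp
  have "a * real N \<le> (1 - \<beta>) / 2 * real N"
    using \<open>a \<le> (1 - \<beta>) / 2\<close> by (intro mult_right_mono) auto
  then have m_ge: "m opt - a * real N \<ge> (if opt = None then (1 - \<beta>) / 2 else a) * real N"
    if "opt \<in> J" for opt
    using expected_adoptions_ge[OF assms(1,3,4) _ _ that[unfolded J_def], of \<beta> N \<Phi>] assms(5,6)
    by (auto simp: m_def a_def field_simps)
  have fail: "measure_pmf.prob ?Q {X. \<not> real (card {i\<in>{..<N}. adopts opt (X i)}) > m opt - a * real N}
      \<le> exp (- a\<^sup>2 * real N / 4)" for opt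
  proof -
    have "measure_pmf.prob ?Q {X. real (card {i\<in>{..<N}. adopts opt (X i)}) \<le> m opt - a * real N}
        \<le> exp (- (a * real N)\<^sup>2 / (4 * real N))"
      using Chernoff_Pi_pmf_lower[of "{..<N}" _ "\<lambda>_. adopts opt" "real N" "a * real N"]
        m_le[of opt] \<open>a > 0\<close> \<open>a \<le> (1 - \<beta>) / 2\<close> assms(5,7)
      by (simp add: m_def)
    also have "- (a * real N)\<^sup>2 / (4 * real N) = - a\<^sup>2 * real N / 4"
      using assms(7) by (simp add: power2_eq_square)
    finally show ?thesis by (simp add: not_less)
  qed
  have "well_spread N M ((1 - \<beta>) / 2) a X"
    if X: "\<forall>opt\<in>J. real (card {i\<in>{..<N}. adopts opt (X i)}) > m opt - a * real N" for X
  proof -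
    have "m None - a * real N < real (card (adopters N X))"
      using X by (simp add: J_def flip: card_adopts)
    then have "(1 - \<beta>) / 2 * real N \<le> real (card (adopters N X))"
      using m_ge[of None] by (simp add: J_def)
    moreover have "a * real N \<le> real (card (adopters_of N X j))" if "j < M" for j
    proof -
      have "m (Some j) - a * real N < real (card (adopters_of N X j))"
        using X that by (simp add: J_def flip: card_adopts)
      then show ?thesis using m_ge[of "Some j"] that by (simp add: J_def)
    qed
    ultimately show ?thesis by (simp add: well_spread_def)
  qed
  then have "measure_pmf.prob ?Q {X. \<forall>opt\<in>J. real (card {i\<in>{..<N}. adopts opt (X i)}) > m opt - a * real N}
      \<le> measure_pmf.prob ?Q {X. well_spread N M ((1 - \<beta>) / 2) a X}"
    by (intro measure_pmf.finite_measure_mono) auto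
  moreover have "measure_pmf.prob ?Q {X. \<forall>opt\<in>J. real (card {i\<in>{..<N}. adopts opt (X i)}) > m opt - a * real N}
      \<ge> 1 - real (card J) * exp (- a\<^sup>2 * real N / 4)"
    using fail by (intro prob_Ball_ge) (simp_all add: J_def)
  moreover have "card J = M + 1" by (simp add: J_def card_image)
  ultimately show "measure_pmf.prob ?Q {X. well_spread N M ((1 - \<beta>) / 2) a X}
      \<ge> 1 - (real M + 1) * exp (- a\<^sup>2 * real N / 4)"
    by (simp add: add.commute)
qed simp

section \<open>One round of the process\<close>

lemma set_adopt_pmf:
  assumes "stochastic_rows M Qh" "0 \<le> \<mu>" "\<mu> \<le> 1" "M \<ge> 1"
    and "X \<in> set_pmf (adopt_pmf N M \<mu> \<beta> \<eta> Qh)" "X i = Some j"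
  shows "j < M"
proof -
  obtain \<Phi> where "X \<in> set_pmf (Pi_pmf {..<N} None (\<lambda>i. agent_choice_pmf M \<mu> \<beta> \<Phi> (Qh i)))"
    using assms(5) by (auto simp: adopt_pmf_eq)
  then have "X \<in> PiE_dflt {..<N} None (\<lambda>i. set_pmf (agent_choice_pmf M \<mu> \<beta> \<Phi> (Qh i)))"
    by (simp add: set_Pi_pmf comp_def)
  then have "Some j \<in> set_pmf (agent_choice_pmf M \<mu> \<beta> \<Phi> (Qh i))"
    using assms(6) by (cases "i < N") (auto simp: PiE_dflt_def)
  then show ?thesis by (rule set_agent_choice_pmf[OF assms(1-4)])
qed

lemma set_Xproc:
  assumes "M \<ge> 1" "0 \<le> \<mu>" "\<mu> \<le> 1"
    and "X \<in> set_pmf (Xproc E N L M \<epsilon> \<mu> \<beta> \<eta> K r)" "X i = Some j"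
  shows "j < M"
proof (cases r)
  case 0
  then show ?thesis using assms(4,5) by simp
next
  case (Suc r')
  then obtain X' Qh where "Qh \<in> set_pmf (Qhat_round E N L M \<epsilon> K (Suc r') X')"
    and "X \<in> set_pmf (adopt_pmf N M \<mu> \<beta> \<eta> Qh)"
    using assms(4) by auto
  then show ?thesis
    using set_adopt_pmf[OF stochastic_rows_Qhat_round[OF assms(1)] assms(2,3,1)] assms(5) by blast
qed

lemma Xproc_well_spread:
  assumes "M \<ge> 1" "0 < \<mu>" "\<mu> < 1" "1/2 < \<beta>" "\<beta> < 1" "N \<ge> 1"
  defines "a \<equiv> \<mu> * (1 - \<beta>) / (2 * real M)"
  shows "measure_pmf.prob (Xproc E N L M \<epsilon> \<mu> \<beta> \<eta> K (Suc r)) {X. well_spread N M ((1 - \<beta>) / 2) a X}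
           \<ge> 1 - (real M + 1) * exp (- a\<^sup>2 * real N / 4)"
  unfolding Xproc.simps a_def
  by (intro prob_bind_pmf_ge_uniform adopt_pmf_well_spread stochastic_rows_Qhat_round assms)
     (simp_all add: assms)

lemma joint_pmf_first_round:
  assumes "M \<ge> 1" "N \<ge> 1" "C \<ge> 1"
  shows "measure_pmf.prob (joint_pmf E N L M \<epsilon> \<mu> \<beta> \<eta> K 1)
           {(X, Qh). \<forall>j<M. sim C (Qbar N Qh j) (Qpop N M (1 - 1) X j)} = 1"
proof -
  have "joint_pmf E N L M \<epsilon> \<mu> \<beta> \<eta> K 1 = return_pmf (\<lambda>_. None, \<lambda>k j. 1 / real M)"
    by (simp add: joint_pmf_def Qhat_round_def bind_return_pmf)
  moreover have "Qbar N (\<lambda>k j. 1 / real M) j = 1 / real M" for j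
    using assms(2) by (simp add: Qbar_def)
  ultimately show ?thesis
    using assms by (simp add: Qpop_def sim_def measure_return indicator_def)
qed

lemma joint_pmf_later_round:
  "r \<ge> 2 \<Longrightarrow> joint_pmf E N L M \<epsilon> \<mu> \<beta> \<eta> K r =
     bind_pmf (Xproc E N L M \<epsilon> \<mu> \<beta> \<eta> K (Suc (r - 2)))
       (\<lambda>X. map_pmf (\<lambda>Qh. (X, Qh)) (est_pmf E N L M \<epsilon> K X))"
  by (simp add: joint_pmf_def Qhat_round_def Suc_diff_Suc numeral_2_eq_2)

lemma Qbar_Qhat_of_sim:
  assumes "\<epsilon> > 0" "N > 0" "j < M"
    and lam: "\<And>k j. k < N \<Longrightarrow> j < M \<Longrightarrow> \<bar>lam k j - perturbed_mean \<epsilon> (Q j)\<bar> \<le> \<tau>"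
    and Q: "\<And>j. j < M \<Longrightarrow> a \<le> Q j" "a > 0" "(\<Sum>j<M. Q j) = 1" and "\<tau> \<ge> 0"
    and w: "2 * (debias_scale \<epsilon> * \<tau>) / a + 2 * real M * (debias_scale \<epsilon> * \<tau>) \<le> w" "w \<le> 1"
  shows "sim (1 + w) (Qbar N (\<lambda>k. Qhat_of M \<epsilon> (lam k)) j) (Q j)"
proof -
  have "0 \<le> 2 * (debias_scale \<epsilon> * \<tau>) / a + 2 * real M * (debias_scale \<epsilon> * \<tau>)"
    using debias_scale_pos[OF assms(1)] \<open>\<tau> \<ge> 0\<close> \<open>a > 0\<close> by simp
  then have "w \<ge> 0" using w(1) by linarith
  have "sim (1 + w) (Qhat_of M \<epsilon> (lam k) j) (Q j)" if "k < N" for k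
    using Qhat_of_sim[OF assms(1,3) lam[OF that] Q \<open>\<tau> \<ge> 0\<close> w] by simp
  then show ?thesis
    unfolding Qbar_def using sim_mean[of N] Q(1)[OF \<open>j < M\<close>] \<open>a > 0\<close> \<open>w \<ge> 0\<close> assms(2) by simp
qed

lemma popularity_bounds:
  assumes "M \<ge> 1" "N \<ge> 1" "a > 0" and supp: "\<And>i j. X i = Some j \<Longrightarrow> j < M"
    and spread: "\<And>j. j < M \<Longrightarrow> a * real N \<le> real (card (adopters_of N X j))"
  defines "Q \<equiv> \<lambda>j. real (card (adopters_of N X j)) / real (card (adopters N X))"
  shows "adopters N X \<noteq> {}" "\<And>j. j < M \<Longrightarrow> a \<le> Q j" "(\<Sum>j<M. Q j) = 1"
proof -
  have "a * real N > 0" using assms(2,3) by simp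
  then have "adopters_of N X 0 \<noteq> {}" using spread[of 0] assms(1) by auto
  then show nonempty: "adopters N X \<noteq> {}" using adopters_of_subset by blast
  then have "card (adopters N X) > 0" by (simp add: card_gt_0_iff)
  show "a \<le> Q j" if "j < M" for j
  proof -
    have "a = a * real N / real N" using assms(2) by simp
    also have "\<dots> \<le> real (card (adopters_of N X j)) / real (card (adopters N X))"
      using spread[OF that] \<open>card (adopters N X) > 0\<close> card_adopters_le[of N X] \<open>a * real N > 0\<close>
      by (intro frac_le) auto
    finally show ?thesis by (simp add: Q_def)
  qed
  have "(\<Sum>j<M. card (adopters_of N X j)) = card (adopters N X)"
    by (rule sum_card_adopters_of) (rule supp)
  then show "(\<Sum>j<M. Q j) = 1"
    using nonempty by (simp add: Q_def flip: sum_divide_distrib of_nat_sum)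
qed

lemma est_pmf_sim:
  assumes "\<epsilon> > 0" "M \<ge> 1" "mixing E N L" "N \<ge> 1" "K \<ge> 1" "r \<noteq> 0"
    and supp: "\<And>i j. X i = Some j \<Longrightarrow> j < M"
    and spread: "\<And>j. j < M \<Longrightarrow> a * real N \<le> real (card (adopters_of N X j))" "a > 0"
    and \<theta>: "\<theta> > 0" "\<theta> + 1 / real N ^ 2 \<le> 1/3" and \<tau>: "0 < \<tau>" "\<tau> \<le> 2"
    and w: "2 * (debias_scale \<epsilon> * (3 * (\<theta> + 1 / real N ^ 2) + \<tau>)) / a
            + 2 * real M * (debias_scale \<epsilon> * (3 * (\<theta> + 1 / real N ^ 2) + \<tau>)) \<le> w" "w \<le> 1"
  defines "D \<equiv> real (card (adopters N X))"
  shows "measure_pmf.prob (est_pmf E N L M \<epsilon> K X) {Qh. \<forall>j<M. sim (1 + w) (Qbar N Qh j) (Qpop N M r X j)}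
           \<ge> 1 - real M * (2 * exp (- \<tau>\<^sup>2 * D / 4))
               - real N * (real M + 1) * (2 * exp (- \<theta>\<^sup>2 * (real K * D / real N) / 8))"
proof -
  define Q where "Q = (\<lambda>j. real (card (adopters_of N X j)) / D)"
  define Vgood where "Vgood = {v. \<forall>j\<in>{..<M}. \<bar>real (card {i\<in>adopters N X. v i j}) / D
                                        - perturbed_mean \<epsilon> (Q j)\<bar> < \<tau>}"
  define Egood where "Egood v = {e. \<forall>k<N. \<forall>j<M. \<bar>Lam N K X v e k j - real (card {i\<in>adopters N X. v i j}) / D\<bar>
                                        \<le> 3 * (\<theta> + 1 / real N ^ 2)}" for v
  have nonempty: "adopters N X \<noteq> {}" and Q_ge: "\<And>j. j < M \<Longrightarrow> a \<le> Q j" and Q_sum: "(\<Sum>j<M. Q j) = 1"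
    using popularity_bounds[OF assms(2,4) spread(2) supp spread(1)] by (simp_all add: Q_def D_def)
  have good: "\<forall>j<M. sim (1 + w) (Qbar N (\<lambda>k. Qhat_of M \<epsilon> (Lam N K X v e k)) j) (Qpop N M r X j)"
    if "v \<in> Vgood" "e \<in> Egood v" for v e
  proof (intro allI impI)
    fix j assume "j < M"
    have "\<bar>Lam N K X v e k j' - perturbed_mean \<epsilon> (Q j')\<bar> \<le> 3 * (\<theta> + 1 / real N ^ 2) + \<tau>"
      if "k < N" "j' < M" for k j'
      using that \<open>v \<in> Vgood\<close> \<open>e \<in> Egood v\<close> unfolding Vgood_def Egood_def by force
    then show "sim (1 + w) (Qbar N (\<lambda>k. Qhat_of M \<epsilon> (Lam N K X v e k)) j) (Qpop N M r X j)"
      using Qbar_Qhat_of_sim[OF assms(1) _ \<open>j < M\<close> _ Q_ge spread(2) Q_sum _ w] assms(4,6) \<theta>(1) \<tau>(1)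
      by (simp add: Qpop_eq Q_def D_def)
  qed
  show ?thesis
    unfolding est_pmf_def
  proof (rule prob_bind_pmf_ge[where G="\<lambda>v. v \<in> Vgood"])
    show "measure_pmf.prob (perturb_pmf N M \<epsilon> X) {v. v \<in> Vgood} \<ge> 1 - real M * (2 * exp (- \<tau>\<^sup>2 * D / 4))"
      using perturb_concentration[OF nonempty \<tau>, of M \<epsilon>] by (simp add: Vgood_def Q_def D_def)
    fix v assume "v \<in> Vgood"
    have "1 - real N * (real M + 1) * (2 * exp (- \<theta>\<^sup>2 * (real K * D / real N) / 8))
        \<le> measure_pmf.prob (endpoints_pmf E N L K X) (Egood v)"
      using endpoints_concentration[OF assms(3-5) nonempty \<theta>, of M v]
      by (simp add: Egood_def D_def)
    also have "\<dots> \<le> measure_pmf.prob (endpoints_pmf E N L K X)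
        ((\<lambda>e k. Qhat_of M \<epsilon> (Lam N K X v e k)) -` {Qh. \<forall>j<M. sim (1 + w) (Qbar N Qh j) (Qpop N M r X j)})"
      using good[OF \<open>v \<in> Vgood\<close>] by (intro measure_pmf.finite_measure_mono) auto
    finally show "1 - real N * (real M + 1) * (2 * exp (- \<theta>\<^sup>2 * (real K * D / real N) / 8))
        \<le> measure_pmf.prob (map_pmf (\<lambda>e k. Qhat_of M \<epsilon> (Lam N K X v e k)) (endpoints_pmf E N L K X))
            {Qh. \<forall>j<M. sim (1 + w) (Qbar N Qh j) (Qpop N M r X j)}"
      by simp
  qed simp_all
qed

section \<open>Choice of the parameters\<close>

lemma accuracy_budget:
  fixes \<gamma> u \<delta> \<tau> :: real
  assumes "\<gamma> > 0" "0 < u" "u \<le> 1" "M \<ge> 1" "0 \<le> \<tau>" "\<tau> \<le> 4 * \<delta>"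
  shows "2 * (\<gamma> * \<tau>) / (u / (2 * real M)) + 2 * real M * (\<gamma> * \<tau>)
           \<le> 2 * (4 * real M * (2 * real M + 1) / u * \<gamma> * \<delta>)"
proof -
  have "real M \<ge> 1" using assms(4) by simp
  have "2 * (\<gamma> * \<tau>) / (u / (2 * real M)) + 2 * real M * (\<gamma> * \<tau>) = 2 * \<gamma> * \<tau> * (2 * real M / u + real M)"
    using assms(2) \<open>real M \<ge> 1\<close> by (simp add: field_simps)
  also have "\<dots> \<le> 2 * \<gamma> * \<tau> * (3 * real M / u)"
  proof (rule mult_left_mono)
    have "real M \<le> real M / u" using assms(2,3) \<open>real M \<ge> 1\<close> by (simp add: field_simps mult_le_cancel_left1)
    moreover have "3 * real M / u = 2 * real M / u + real M / u" by (simp add: field_simps)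
    ultimately show "2 * real M / u + real M \<le> 3 * real M / u" by linarith
  qed (use assms in auto)
  also have "\<dots> \<le> 2 * \<gamma> * (4 * \<delta>) * (3 * real M / u)"
    using assms by (intro mult_right_mono mult_left_mono) auto
  also have "\<dots> \<le> 2 * (4 * real M * (2 * real M + 1) / u * \<gamma> * \<delta>)"
  proof -
    have "24 * real M \<le> 8 * real M * (2 * real M + 1)" using \<open>real M \<ge> 1\<close> by (simp add: algebra_simps)
    then have "24 * real M * (\<gamma> * \<delta>) \<le> 8 * real M * (2 * real M + 1) * (\<gamma> * \<delta>)"
      using assms by (intro mult_right_mono) auto
    then show ?thesis using assms(2) by (simp add: field_simps)
  qed
  finally show ?thesis .
qed

lemma exp_minus_le_inverse_power:
  assumes "real N > 0" "real k * ln (real N) \<le> x"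
  shows "exp (- x) \<le> 1 / real N ^ k"
proof -
  have "exp (- x) \<le> exp (- (real k * ln (real N)))" using assms(2) by simp
  also have "\<dots> = 1 / real N ^ k" using assms(1) by (simp add: exp_minus exp_of_nat_mult inverse_eq_divide)
  finally show ?thesis .
qed

text \<open>The relative error \<open>\<delta> = sqrt (ln N / g N)\<close> is small, but not smaller than the \<open>1 / N\<^sup>2\<close>
  mixing error of the random walk.\<close>

lemma rate_bounds:
  fixes G c :: real
  assumes "N \<ge> 4" "(36 + 4 * c\<^sup>2) * ln (real N) < G" "G \<le> real N"
  defines "\<delta> \<equiv> sqrt (ln (real N) / G)"
  shows "\<delta>\<^sup>2 = ln (real N) / G" "1 / real N ^ 2 \<le> \<delta> / 6" "\<delta> \<le> 1/6" "c * \<delta> \<le> 1/2"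
proof -
  have "exp 1 \<le> real N" using exp_le assms(1) by linarith
  then have "ln (real N) \<ge> 1" using ln_ge_iff[of "real N" 1] assms(1) by simp
  have "36 + 4 * c\<^sup>2 > 0" by (simp add: add_pos_nonneg)
  then have "0 < (36 + 4 * c\<^sup>2) * ln (real N)" using \<open>ln (real N) \<ge> 1\<close> by simp
  then have "G > 0" using assms(2) by linarith
  show sq: "\<delta>\<^sup>2 = ln (real N) / G" using \<open>ln (real N) \<ge> 1\<close> \<open>G > 0\<close> by (simp add: \<delta>_def)
  have "ln (real N) / G \<le> 1 / (36 + 4 * c\<^sup>2)"
    using \<open>36 + 4 * c\<^sup>2 > 0\<close> assms(2) \<open>G > 0\<close> by (simp add: field_simps)
  then have small: "\<delta>\<^sup>2 * (36 + 4 * c\<^sup>2) \<le> 1"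
    using \<open>36 + 4 * c\<^sup>2 > 0\<close> by (simp add: sq field_simps)
  have "\<delta>\<^sup>2 \<le> (1/6)\<^sup>2"
    using small mult_left_mono[of 36 "36 + 4 * c\<^sup>2" "\<delta>\<^sup>2"] by (simp add: power2_eq_square)
  then show "\<delta> \<le> 1/6" by (rule power2_le_imp_le) simp
  have "(c * \<delta>)\<^sup>2 \<le> 1/4"
    using small by (simp add: power_mult_distrib algebra_simps) (use zero_le_power2[of \<delta>] in linarith)
  then have "(c * \<delta>)\<^sup>2 \<le> (1/2)\<^sup>2" by (simp add: power2_eq_square)
  then show "c * \<delta> \<le> 1/2" by (rule power2_le_imp_le) simp
  have "real N ^ 3 \<ge> 4 ^ 3" using assms(1) by (intro power_mono) auto
  then have "36 * real N \<le> real N * real N ^ 3" using assms(1) by simp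
  then have "(6 / real N ^ 2)\<^sup>2 \<le> 1 / real N"
    using assms(1) by (simp add: power_divide field_simps flip: power_mult) (simp add: eval_nat_numeral)
  also have "\<dots> \<le> 1 / G" using assms(3) \<open>G > 0\<close> by (intro divide_left_mono) auto
  also have "\<dots> \<le> \<delta>\<^sup>2" using sq \<open>ln (real N) \<ge> 1\<close> \<open>G > 0\<close> by (simp add: divide_right_mono)
  finally have "6 / real N ^ 2 \<le> \<delta>" by (rule power2_le_imp_le) (use \<open>ln (real N) \<ge> 1\<close> \<open>G > 0\<close> in \<open>simp add: \<delta>_def\<close>)
  then show "1 / real N ^ 2 \<le> \<delta> / 6" by simp
qed

lemma exp_failure_le:
  assumes "real N \<ge> 1" "11 * ln (real N) \<le> x" "0 \<le> C"
  shows "real N * (C * exp (- x)) \<le> C / real N ^ 10"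
proof -
  have "real N * (C * exp (- x)) \<le> real N * (C * (1 / real N ^ 11))"
    using exp_minus_le_inverse_power[of N 11 x] assms by (intro mult_left_mono) auto
  also have "\<dots> = C / real N ^ 10" using assms(1) by (simp add: field_simps eval_nat_numeral)
  finally show ?thesis .
qed

lemma rate_exponent_ge:
  assumes "\<delta>\<^sup>2 = ln (real N) / G" "G > 0" "ln (real N) \<ge> 0" "C * G \<le> Y"
  shows "C * ln (real N) \<le> \<delta>\<^sup>2 * Y"
proof -
  have "C * ln (real N) = C * G * (ln (real N) / G)" using assms(2) by simp
  also have "\<dots> \<le> Y * (ln (real N) / G)" using assms(2-4) by (intro mult_right_mono) auto
  finally show ?thesis using assms(1) by (simp add: mult.commute)
qed

lemma sample_sizes_ge:
  assumes "\<beta> < 1" "\<sigma> \<ge> 11" "G > 0" "G < (1 - \<beta>) / 352 * real N" "real K \<ge> 16 * \<sigma> / (1 - \<beta>) * G"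
    and "(1 - \<beta>) / 2 * real N \<le> D"
  shows "K \<ge> 1" "176 * G \<le> D" "88 * G \<le> real K * D / real N"
proof -
  have "16 * \<sigma> / (1 - \<beta>) * G > 0" using assms(1-3) by simp
  then show "K \<ge> 1" using assms(5) by simp
  have "(1 - \<beta>) / 2 * real N > 176 * G" using assms(4) by (simp add: field_simps)
  then show "176 * G \<le> D" using assms(6) by linarith
  have "0 < (1 - \<beta>) / 352 * real N" using assms(3,4) by linarith
  then have "real N > 0" using assms(1) by (simp add: zero_less_mult_iff)
  have "(16 * \<sigma> / (1 - \<beta>) * G) * ((1 - \<beta>) / 2 * real N) \<le> real K * D"
    using assms(5,6) \<open>16 * \<sigma> / (1 - \<beta>) * G > 0\<close> assms(1) by (intro mult_mono) auto
  moreover have "(16 * \<sigma> / (1 - \<beta>) * G) * ((1 - \<beta>) / 2 * real N) = 8 * \<sigma> * G * real N"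
    using assms(1) by (simp add: field_simps)
  ultimately have "8 * \<sigma> * G \<le> real K * D / real N"
    using \<open>real N > 0\<close> by (simp add: pos_le_divide_eq ac_simps)
  moreover have "88 * G \<le> 8 * \<sigma> * G" using assms(2,3) by simp
  ultimately show "88 * G \<le> real K * D / real N" by linarith
qed

lemma est_pmf_sim_large_N:
  fixes M :: nat and \<epsilon> \<mu> \<beta> :: real
  defines "c \<equiv> 4 * real M * (2 * real M + 1) / (\<mu> * (1 - \<beta>)) * debias_scale \<epsilon>"
  assumes par: "\<epsilon> > 0" "M \<ge> 1" "0 < \<mu>" "\<mu> < 1" "1/2 < \<beta>" "\<beta> < 1" "\<sigma> \<ge> 11"
    and mix: "mixing E N L" and N: "N \<ge> 4" and r: "r \<noteq> 0"
    and supp: "\<And>i j. X i = Some j \<Longrightarrow> j < M"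
    and spread: "well_spread N M ((1 - \<beta>) / 2) (\<mu> * (1 - \<beta>) / (2 * real M)) X"
    and G: "G > 0" "G < (1 - \<beta>) / 352 * real N" "real K \<ge> 16 * \<sigma> / (1 - \<beta>) * G"
    and \<delta>: "\<delta>\<^sup>2 = ln (real N) / G" "1 / real N ^ 2 \<le> \<delta> / 6" "\<delta> \<le> 1/6" "c * \<delta> \<le> 1/2"
  shows "measure_pmf.prob (est_pmf E N L M \<epsilon> K X) {Qh. \<forall>j<M. sim (1 + 2 * (c * \<delta>)) (Qbar N Qh j) (Qpop N M r X j)}
           \<ge> 1 - (3 * real M + 2) / real N ^ 10"
proof -
  define D where "D = real (card (adopters N X))"
  define a where "a = \<mu> * (1 - \<beta>) / (2 * real M)"
  have "0 < 1 / real N ^ 2" using N by simp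
  then have "\<delta> > 0" using \<delta>(2) by linarith
  have "ln (real N) \<ge> 0" using N by simp
  have "a > 0" using par(2-6) by (simp add: a_def)
  have D_ge: "(1 - \<beta>) / 2 * real N \<le> D" and spread_j: "\<And>j. j < M \<Longrightarrow> a * real N \<le> real (card (adopters_of N X j))"
    using spread by (simp_all add: well_spread_def D_def a_def)
  note sizes = sample_sizes_ge[OF par(6,7) G D_ge]
  have "2 * (debias_scale \<epsilon> * (3 * (\<delta> + 1 / real N ^ 2) + \<delta> / 2)) / a
      + 2 * real M * (debias_scale \<epsilon> * (3 * (\<delta> + 1 / real N ^ 2) + \<delta> / 2)) \<le> 2 * (c * \<delta>)"
    using accuracy_budget[OF debias_scale_pos[OF par(1)], of "\<mu> * (1 - \<beta>)" M "3 * (\<delta> + 1 / real N ^ 2) + \<delta> / 2" \<delta>]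
      par(2-6) \<delta>(2) \<open>\<delta> > 0\<close>
    by (simp add: a_def c_def mult_le_one ac_simps)
  then have "1 - real M * (2 * exp (- (\<delta> / 2)\<^sup>2 * D / 4))
          - real N * (real M + 1) * (2 * exp (- \<delta>\<^sup>2 * (real K * D / real N) / 8))
      \<le> measure_pmf.prob (est_pmf E N L M \<epsilon> K X) {Qh. \<forall>j<M. sim (1 + 2 * (c * \<delta>)) (Qbar N Qh j) (Qpop N M r X j)}"
    unfolding D_def using \<delta> \<open>\<delta> > 0\<close> N
    by (intro est_pmf_sim[OF par(1) par(2) mix _ sizes(1) r supp spread_j \<open>a > 0\<close>]) auto
  moreover have "real M * (2 * exp (- (\<delta> / 2)\<^sup>2 * D / 4)) \<le> real M / real N ^ 10"
  proof -
    have "11 * ln (real N) \<le> (\<delta> / 2)\<^sup>2 * D / 4"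
      using rate_exponent_ge[OF \<delta>(1) G(1) \<open>ln (real N) \<ge> 0\<close> sizes(2)] by (simp add: power_divide)
    then show ?thesis
      using exp_failure_le[of N "(\<delta> / 2)\<^sup>2 * D / 4" "real M"] N
        mult_right_mono[of 2 "real N" "real M * exp (- (\<delta> / 2)\<^sup>2 * D / 4)"] by simp
  qed
  moreover have "real N * (real M + 1) * (2 * exp (- \<delta>\<^sup>2 * (real K * D / real N) / 8))
      \<le> 2 * (real M + 1) / real N ^ 10"
  proof -
    have "11 * ln (real N) \<le> \<delta>\<^sup>2 * (real K * D / real N) / 8"
      using divide_right_mono[OF rate_exponent_ge[OF \<delta>(1) G(1) \<open>ln (real N) \<ge> 0\<close> sizes(3)], of 8] by simp
    then show ?thesis
      using exp_failure_le[of N "\<delta>\<^sup>2 * (real K * D / real N) / 8" "2 * (real M + 1)"] N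
      by (simp add: algebra_simps)
  qed
  moreover have "(3 * real M + 2) / real N ^ 10 = real M / real N ^ 10 + 2 * (real M + 1) / real N ^ 10"
    using N by (simp add: field_simps)
  ultimately show ?thesis by linarith
qed

lemma eventually_exp_le_inverse_power:
  fixes b C :: real
  assumes "b > 0"
  shows "eventually (\<lambda>N::nat. C * exp (- b * real N / 4) \<le> 1 / real N ^ 10) at_top"
  using assms by real_asymp

lemma later_round_estimate_prob:
  fixes M :: nat and \<epsilon> \<mu> \<beta> \<sigma> :: real
  defines "c \<equiv> 4 * real M * (2 * real M + 1) / (\<mu> * (1 - \<beta>)) * debias_scale \<epsilon>"
  assumes par: "\<epsilon> > 0" "M \<ge> 1" "0 < \<mu>" "\<mu> < 1" "1/2 < \<beta>" "\<beta> < 1" "\<sigma> \<ge> 11"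
    and mix: "mixing E N L" and r: "r \<ge> 2" and N: "N \<ge> 4"
    and adopt: "(real M + 1) * exp (- (\<mu> * (1 - \<beta>) / (2 * real M))\<^sup>2 * real N / 4) \<le> 1 / real N ^ 10"
    and G: "(36 + 4 * c\<^sup>2) * ln (real N) < G" "G < (1 - \<beta>) / 352 * real N"
  defines "\<delta> \<equiv> sqrt (ln (real N) / G)"
  shows "measure_pmf.prob (joint_pmf E N L M \<epsilon> \<mu> \<beta> \<eta> (nat \<lceil>16 * \<sigma> / (1 - \<beta>) * G\<rceil>) r)
           {(X, Qh). \<forall>j<M. sim (1 + 2 * (c * \<delta>)) (Qbar N Qh j) (Qpop N M (r - 1) X j)}
         \<ge> 1 - (3 * real M + 3) / real N ^ 10"
proof -
  define K where "K = nat \<lceil>16 * \<sigma> / (1 - \<beta>) * G\<rceil>"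
  define spread where "spread = well_spread N M ((1 - \<beta>) / 2) (\<mu> * (1 - \<beta>) / (2 * real M))"
  have "0 < (36 + 4 * c\<^sup>2) * ln (real N)" using N by (simp add: add_pos_nonneg)
  then have "G > 0" using G(1) by linarith
  have "(1 - \<beta>) / 352 * real N \<le> real N" using par(5) by (simp add: field_simps)
  then have "G \<le> real N" using G(2) by linarith
  note rate = rate_bounds[OF N G(1) this, folded \<delta>_def]
  have "real K \<ge> 16 * \<sigma> / (1 - \<beta>) * G" unfolding K_def by (rule real_nat_ceiling_ge)
  have "measure_pmf.prob (Xproc E N L M \<epsilon> \<mu> \<beta> \<eta> K (Suc (r - 2))) {X. spread X} \<ge> 1 - 1 / real N ^ 10"
    using Xproc_well_spread[OF par(2-4) _ par(6), of N E L \<epsilon> \<eta> K "r - 2"] par(5) N adopt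
    by (simp add: spread_def)
  moreover have "measure_pmf.prob (map_pmf (\<lambda>Qh. (X, Qh)) (est_pmf E N L M \<epsilon> K X))
      {(X, Qh). \<forall>j<M. sim (1 + 2 * (c * \<delta>)) (Qbar N Qh j) (Qpop N M (r - 1) X j)}
      \<ge> 1 - (3 * real M + 2) / real N ^ 10"
    if "X \<in> set_pmf (Xproc E N L M \<epsilon> \<mu> \<beta> \<eta> K (Suc (r - 2)))" "spread X" for X
  proof -
    have "\<And>i j. X i = Some j \<Longrightarrow> j < M" using set_Xproc[OF par(2) _ _ that(1)] par(3,4) by simp
    then show ?thesis
      using est_pmf_sim_large_N[OF par mix N _ _ _ \<open>G > 0\<close> G(2) \<open>real K \<ge> _\<close> rate[unfolded c_def], of "r - 1"]
        that(2) r
      by (simp add: c_def spread_def vimage_def)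
  qed
  ultimately have "measure_pmf.prob (joint_pmf E N L M \<epsilon> \<mu> \<beta> \<eta> K r)
      {(X, Qh). \<forall>j<M. sim (1 + 2 * (c * \<delta>)) (Qbar N Qh j) (Qpop N M (r - 1) X j)}
      \<ge> 1 - 1 / real N ^ 10 - (3 * real M + 2) / real N ^ 10"
    using r by (simp only: joint_pmf_later_round) (rule prob_bind_pmf_ge[where G=spread]; simp)
  moreover have "1 / real N ^ 10 + (3 * real M + 2) / real N ^ 10 = (3 * real M + 3) / real N ^ 10"
    by (simp add: add_divide_distrib[symmetric])
  ultimately show ?thesis unfolding K_def by linarith
qed

lemma round_estimate_prob:
  fixes M :: nat and \<epsilon> \<mu> \<beta> \<sigma> :: real and g :: "nat \<Rightarrow> real"
  defines "c \<equiv> 4 * real M * (2 * real M + 1) / (\<mu> * (1 - \<beta>)) * debias_scale \<epsilon>"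
  assumes par: "\<epsilon> > 0" "M \<ge> 1" "0 < \<mu>" "\<mu> < 1" "1/2 < \<beta>" "\<beta> < 1" "\<sigma> \<ge> 11"
    and mix: "mixing E N L" and r: "r \<ge> 1" and N: "N \<ge> 4"
    and adopt: "(real M + 1) * exp (- (\<mu> * (1 - \<beta>) / (2 * real M))\<^sup>2 * real N / 4) \<le> 1 / real N ^ 10"
    and g: "(36 + 4 * c\<^sup>2) * ln (real N) < g N" "g N < (1 - \<beta>) / 352 * real N"
  shows "measure_pmf.prob (joint_pmf E N L M \<epsilon> \<mu> \<beta> \<eta> (nat \<lceil>16 * \<sigma> / (1 - \<beta>) * g N\<rceil>) r)
           {(X, Qh). \<forall>j<M. sim (1 + 2 * (c * sqrt (ln (real N) / g N))) (Qbar N Qh j) (Qpop N M (r - 1) X j)}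
         \<ge> 1 - (10 * real M + 3) / real N ^ 10"
proof (cases "r = 1")
  case True
  have "0 < (36 + 4 * c\<^sup>2) * ln (real N)" using N by (simp add: add_pos_nonneg)
  then have "g N > 0" using g(1) by linarith
  moreover have "c \<ge> 0" using par debias_scale_pos[of \<epsilon>] by (simp add: c_def)
  ultimately have "1 \<le> 1 + 2 * (c * sqrt (ln (real N) / g N))" using N by simp
  then show ?thesis using joint_pmf_first_round[OF par(2)] True N by simp
next
  case False
  then have "(3 * real M + 3) / real N ^ 10 \<le> (10 * real M + 3) / real N ^ 10"
    by (simp add: divide_right_mono)
  then show ?thesis
    using later_round_estimate_prob[OF par mix _ N adopt g[unfolded c_def], of r \<eta>] False r
    by (simp add: c_def)
qed

lemma eventually_large_N:
  fixes g :: "nat \<Rightarrow> real"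
  assumes "\<forall>l>0. eventually (\<lambda>n. g n > l * ln (real n) \<and> g n < l * real n) at_top"
    and "b > 0" "l > 0" "l' > 0"
  shows "eventually (\<lambda>N. 4 \<le> N \<and> C * exp (- b * real N / 4) \<le> 1 / real N ^ 10 \<and>
           l * ln (real N) < g N \<and> g N < l' * real N) at_top"
proof -
  have "eventually (\<lambda>N. l * ln (real N) < g N) at_top"
    using assms(1,3) by (auto elim: eventually_mono)
  moreover have "eventually (\<lambda>N. g N < l' * real N) at_top"
    using assms(1,4) by (auto elim: eventually_mono)
  ultimately show ?thesis
    using eventually_ge_at_top[of 4] eventually_exp_le_inverse_power[OF assms(2), of C]
    by eventually_elim blast
qed

theorem lemma10:
  fixes M :: nat and \<epsilon> \<mu> \<beta> \<sigma> :: real and g :: "nat \<Rightarrow> real" and \<eta> :: "nat \<Rightarrow> real"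
  assumes "M \<ge> 1" and "\<epsilon> > 0" and "0 < \<mu>" and "\<mu> < 1"
    and "1 / 2 < \<beta>" and "\<beta> < exp 1 / (exp 1 + 1)" and "\<sigma> \<ge> 11"
    and "\<forall>j<M. 0 \<le> \<eta> j \<and> \<eta> j \<le> 1"
    and "\<forall>l>0. eventually (\<lambda>n. g n > l * ln (real n) \<and> g n < l * real n) at_top"
  shows
    "let \<delta> = ln (\<beta> / (1 - \<beta>));
         c = 4 * real M * (2 * real M + 1) / (\<mu> * (1 - \<beta>)) *
             ((exp (\<epsilon> / 2) + 1) / (exp (\<epsilon> / 2) - 1));
         h = 16 * \<sigma> / (1 - \<beta>)
     in \<exists>N0. \<forall>N\<ge>N0.
          sqrt (g N / ln (real N)) \<ge> c * real M powr (ln 5 / \<delta>\<^sup>2) / \<delta> \<longrightarrow>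
          (\<forall>E L. graph_ok E N \<and> mixing E N L \<longrightarrow>
            (\<forall>r\<ge>1.
              measure_pmf.prob
                (joint_pmf E N L M \<epsilon> \<mu> \<beta> \<eta> (nat \<lceil>h * g N\<rceil>) r)
                {(X, Qh). \<forall>j<M.
                   sim (1 + 2 * (c * sqrt (ln (real N) / g N)))
                       (Qbar N Qh j) (Qpop N M (r - 1) X j)}
              \<ge> 1 - (10 * real M + 3) / real N ^ 10))"
proof -
  define c where "c = 4 * real M * (2 * real M + 1) / (\<mu> * (1 - \<beta>)) * debias_scale \<epsilon>"
  define a where "a = \<mu> * (1 - \<beta>) / (2 * real M)"
  have "exp 1 / (exp 1 + 1) < (1::real)" by (simp add: add_pos_pos)
  then have "\<beta> < 1" using assms(6) by linarith
  have "a > 0" using assms(1,3,4) \<open>\<beta> < 1\<close> by (simp add: a_def)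
  have "(1 - \<beta>) / 352 > 0" "36 + 4 * c\<^sup>2 > 0" using \<open>\<beta> < 1\<close> by (auto simp: add_pos_nonneg)
  with assms(9) have "eventually (\<lambda>N. 4 \<le> N \<and> (real M + 1) * exp (- a\<^sup>2 * real N / 4) \<le> 1 / real N ^ 10 \<and>
      (36 + 4 * c\<^sup>2) * ln (real N) < g N \<and> g N < (1 - \<beta>) / 352 * real N) at_top"
    using \<open>a > 0\<close> by (intro eventually_large_N) auto
  then obtain N0 where N0: "\<And>N. N \<ge> N0 \<Longrightarrow> 4 \<le> N \<and> (real M + 1) * exp (- a\<^sup>2 * real N / 4) \<le> 1 / real N ^ 10 \<and>
      (36 + 4 * c\<^sup>2) * ln (real N) < g N \<and> g N < (1 - \<beta>) / 352 * real N"
    unfolding eventually_at_top_linorder by blast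
  show ?thesis
    unfolding Let_def debias_scale_def[symmetric] c_def[symmetric]
  proof (intro exI[of _ N0] allI impI)
    fix N E L and r :: nat
    assume "N0 \<le> N" "graph_ok E N \<and> mixing E N L" "1 \<le> r"
    then show "measure_pmf.prob (joint_pmf E N L M \<epsilon> \<mu> \<beta> \<eta> (nat \<lceil>16 * \<sigma> / (1 - \<beta>) * g N\<rceil>) r)
        {(X, Qh). \<forall>j<M. sim (1 + 2 * (c * sqrt (ln (real N) / g N))) (Qbar N Qh j) (Qpop N M (r - 1) X j)}
        \<ge> 1 - (10 * real M + 3) / real N ^ 10"
      using round_estimate_prob[OF assms(2,1,3,4,5) \<open>\<beta> < 1\<close> assms(7), of E N L r] N0[of N]
      unfolding a_def c_def by blast
  qed
qed

end
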